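(* Let $B$ be an integral domain of characteristic zero, $n\ge3$, $x_1,\dots,x_n\in B$ and $a_1,\dots,a_n$ positive integers. Assume (i) $x_1^{a_1}+\cdots+x_n^{a_n}=0$; (ii) $\sum_{i=1}^n\frac1{a_i}\le\frac1{n-2}$; (iii) $x_1,\dots,x_n$ are pairwise relatively prime in $B$. Then $x_1,\dots,x_n\in\mathrm{ML}(R)$ in each of the following cases: (a) $R$ is a factorially closed subring of $B$ with $x_1,\dots,x_n\in R$; (b) $R=B^{[N]}$ (a polynomial ring in $N$ variables over $B$) for some $N\ge0$. Moreover, $x_1,\dots,x_n$ belong to the rigid core of $B$.
   Context: Two elements $x,y$ of a domain $B$ are relatively prime if $xB\cap yB=xyB$ and, if $0\in\{x,y\}$, then one of $x,y$ is a unit of $B$. A subring $A$ of a domain $B$ is factorially closed if for all nonzero $x,y\in B$, $xy\in A$ implies $x,y\in A$. For a domain $R$ of characteristic zero, $\mathrm{ML}(R)=\bigcap_{D}\ker D$ over all locally nilpotent derivations $D:R\to R$ (derivations such that each element is killed by some power of $D$). The rigid core of $B$ is $\bigcap_{i\ge0}\mathrm{ML}_i(B)$ where $\mathrm{ML}_0(B)=B$ and $\mathrm{ML}_{i+1}(B)=\mathrm{ML}(\mathrm{ML}_i(B))$. *)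

theory Defs
  imports Complex_Main "HOL-Library.Poly_Mapping"
begin

text \<open>Subrings of the ambient ring B (given by the type).\<close>
definition subring :: "'a::comm_ring_1 set \<Rightarrow> bool" where
  "subring R \<longleftrightarrow> 0 \<in> R \<and> 1 \<in> R \<and>
     (\<forall>x\<in>R. \<forall>y\<in>R. x + y \<in> R \<and> x - y \<in> R \<and> x * y \<in> R)"

definition rel_prime :: "'a::comm_ring_1 \<Rightarrow> 'a \<Rightarrow> bool" where
  "rel_prime x y \<longleftrightarrow>
     range (\<lambda>b. x * b) \<inter> range (\<lambda>b. y * b) = range (\<lambda>b. x * y * b) \<and>
     ((x = 0 \<or> y = 0) \<longrightarrow> (x dvd 1 \<or> y dvd 1))"

definition factorially_closed :: "'a::comm_ring_1 set \<Rightarrow> bool" where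
  "factorially_closed A \<longleftrightarrow>
     (\<forall>x y. x \<noteq> 0 \<longrightarrow> y \<noteq> 0 \<longrightarrow> x * y \<in> A \<longrightarrow> x \<in> A \<and> y \<in> A)"

text \<open>Derivations of a subring R (only the restriction of D to R matters).\<close>
definition derivation_on :: "'a::comm_ring_1 set \<Rightarrow> ('a \<Rightarrow> 'a) \<Rightarrow> bool" where
  "derivation_on R D \<longleftrightarrow> (\<forall>a\<in>R. D a \<in> R) \<and>
     (\<forall>a\<in>R. \<forall>b\<in>R. D (a + b) = D a + D b \<and> D (a * b) = a * D b + b * D a)"

definition lnd_on :: "'a::comm_ring_1 set \<Rightarrow> ('a \<Rightarrow> 'a) \<Rightarrow> bool" where
  "lnd_on R D \<longleftrightarrow> derivation_on R D \<and> (\<forall>a\<in>R. \<exists>k. (D ^^ k) a = 0)"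

definition mlinv :: "'a::comm_ring_1 set \<Rightarrow> 'a set" where
  "mlinv R = {a \<in> R. \<forall>D. lnd_on R D \<longrightarrow> D a = 0}"

fun mlinv_iter :: "nat \<Rightarrow> 'a::comm_ring_1 set" where
  "mlinv_iter 0 = UNIV"
| "mlinv_iter (Suc i) = mlinv (mlinv_iter i)"

definition rigid_core :: "'a::comm_ring_1 set" where
  "rigid_core = (\<Inter>i. mlinv_iter i)"

text \<open>The polynomial ring B^[N] in variables X_0,...,X_(N-1), as a subring of
  the polynomial ring in countably many variables (monomials are finitely supported exponent vectors).\<close>
definition poly_ring :: "nat \<Rightarrow> ((nat \<Rightarrow>\<^sub>0 nat) \<Rightarrow>\<^sub>0 'a::comm_ring_1) set" where
  "poly_ring N = {p :: (nat \<Rightarrow>\<^sub>0 nat) \<Rightarrow>\<^sub>0 'a. \<forall>m\<in>Poly_Mapping.keys p. \<forall>i\<in>Poly_Mapping.keys m. i < N}"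

definition const_poly :: "'a::comm_ring_1 \<Rightarrow> ((nat \<Rightarrow>\<^sub>0 nat) \<Rightarrow>\<^sub>0 'a)" where
  "const_poly b = Poly_Mapping.single 0 b"

end

theory Submission
  imports Defs "Jordan_Normal_Form.Determinant"
begin

(* Let D be a locally nilpotent derivation of a subring R containing the x_i. Its degree function
   deg f = max {k. D^k f \<noteq> 0} is additive on products, so ker D is factorially closed and
   contains the units of R; this settles the case where some x_i vanishes. Otherwise suppose D
   moves some x_i. Among the relations with coefficients in ker D between 1 and the powers
   x_i^a_i with D x_i \<noteq> 0, take one of minimal support, g_0 + ... + g_m = 0; then m < n.
   By minimality g_0, ..., g_(m-1) are independent over ker D, so their Wronskian W is non-zero,
   and as the g_j sum to zero, W only changes its sign when any g_j is exchanged with g_m.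
   Hence every x_j^(a_j - m + 1) divides W, while deg W is at most
   \<Sum>_j a_j deg x_j - a_l deg x_l - m(m-1)/2 for every l. As in the proof of the
   Mason-Stothers theorem, the two bounds contradict \<Sum> 1/a_j \<le> 1/(n-2).
   So the x_i lie in ML(R) whenever they are pairwise coprime inside R, which is the case for
   factorially closed R and for R = B^[N]. Since ML of a factorially closed subring is again a
   factorially closed subring, induction gives the rigid core. *)

section \<open>Determinants\<close>

lemma det_row_sum:
  fixes F :: "nat \<Rightarrow> nat \<Rightarrow> 'a::comm_ring_1"
  assumes "l < n" "finite S"
  shows "det (mat n n (\<lambda>(j, i). if j = l then \<Sum>s\<in>S. c s * h s i else F j i))
       = (\<Sum>s\<in>S. c s * det (mat n n (\<lambda>(j, i). if j = l then h s i else F j i)))"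
proof -
  let ?row = "\<lambda>s. vec n (\<lambda>i. c s * h s i)"
  have lhs: "mat n n (\<lambda>(j, i). if j = l then \<Sum>s\<in>S. c s * h s i else F j i)
      = mat\<^sub>r n n (\<lambda>j. if j = l then finsum_vec TYPE('a) n ?row S else vec n (F j))"
    by (rule eq_matI) (auto simp: index_finsum_vec[OF assms(2)])
  have rhs: "mat\<^sub>r n n (\<lambda>j. if j = l then ?row s else vec n (F j))
      = multrow l (c s) (mat n n (\<lambda>(j, i). if j = l then h s i else F j i))" for s
    by (rule eq_matI) auto
  have "det (mat\<^sub>r n n (\<lambda>j. if j = l then finsum_vec TYPE('a) n ?row S else vec n (F j)))
      = (\<Sum>s\<in>S. det (mat\<^sub>r n n (\<lambda>j. if j = l then ?row s else vec n (F j))))"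
    by (rule det_linear_row_finsum) (use assms in auto)
  then show ?thesis unfolding lhs rhs using assms(1) by (simp add: det_multrow)
qed

lemma cofactor_column_combination:
  assumes A: "A \<in> carrier_mat n n" and "i < n" "k < n"
  shows "(\<Sum>j<n. cofactor A j i * A $$ (j, k)) = (if k = i then det A else 0)"
proof -
  have "(adj_mat A * A) $$ (i, k) = (\<Sum>j<n. cofactor A j i * A $$ (j, k))"
    using assms adj_mat(1)[OF A] by (simp add: scalar_prod_def adj_mat_def atLeast0LessThan)
  then show ?thesis using adj_mat(3)[OF A] assms by (cases "k = i") auto
qed

lemma row_combination_eq_zero:
  fixes A :: "'a::idom mat"
  assumes A: "A \<in> carrier_mat n n" and "det A \<noteq> 0" and "l < n"
    and comb: "\<And>k. k < n \<Longrightarrow> (\<Sum>j<n. u j * A $$ (j, k)) = 0"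
  shows "u l = 0"
proof -
  have entry: "(A * adj_mat A) $$ (j, l) = (\<Sum>k<n. A $$ (j, k) * adj_mat A $$ (k, l))" if "j < n" for j
    using that assms(3) A adj_mat(1)[OF A] by (simp add: scalar_prod_def atLeast0LessThan)
  have "u l * det A = (\<Sum>j<n. if j = l then u j * det A else 0)" using assms(3) by simp
  also have "\<dots> = (\<Sum>j<n. u j * (A * adj_mat A) $$ (j, l))"
    using assms(3) adj_mat(2)[OF A] by (intro sum.cong) auto
  also have "\<dots> = (\<Sum>k<n. (\<Sum>j<n. u j * A $$ (j, k)) * adj_mat A $$ (k, l))"
    by (simp add: entry sum_distrib_left sum_distrib_right mult.assoc) (rule sum.swap)
  also have "\<dots> = 0" using comb by simp
  finally show ?thesis using assms(2) by simp
qed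

section \<open>The exponent inequality\<close>

lemma abc_bound_term_le:
  fixes A V :: "nat \<Rightarrow> nat" and m T :: nat
  assumes bound: "(\<Sum>j\<in>J. (A j - (m - 2)) * V j) + T + A l * V l \<le> (\<Sum>j\<in>J. A j * V j)"
  shows "real (A l) * real (V l) \<le> real (m - 2) * (\<Sum>j\<in>J. real (V j)) - real T"
proof -
  have "real (m - 2) * (\<Sum>j\<in>J. real (V j)) = (\<Sum>j\<in>J. real (m - 2) * real (V j))"
    by (rule sum_distrib_left)
  then have "(\<Sum>j\<in>J. real (A j) * real (V j)) - real (m - 2) * (\<Sum>j\<in>J. real (V j))
      = (\<Sum>j\<in>J. (real (A j) - real (m - 2)) * real (V j))"
    by (simp add: sum_subtractf left_diff_distrib)
  also have "\<dots> \<le> (\<Sum>j\<in>J. real ((A j - (m - 2)) * V j))"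
  proof (intro sum_mono)
    fix j
    have "real (A j) - real (m - 2) \<le> real (A j - (m - 2))"
      by (cases "m - 2 \<le> A j") (simp_all add: of_nat_diff)
    then show "(real (A j) - real (m - 2)) * real (V j) \<le> real ((A j - (m - 2)) * V j)"
      by (simp add: mult_right_mono)
  qed
  finally have "(\<Sum>j\<in>J. real (A j) * real (V j)) - real (m - 2) * (\<Sum>j\<in>J. real (V j))
      \<le> real (\<Sum>j\<in>J. (A j - (m - 2)) * V j)" by simp
  moreover have "real ((\<Sum>j\<in>J. (A j - (m - 2)) * V j) + T + A l * V l) \<le> real (\<Sum>j\<in>J. A j * V j)"
    using bound by (simp only: of_nat_le_iff)
  ultimately show ?thesis by simp
qed

lemma abc_bound_contradiction:
  fixes A V :: "nat \<Rightarrow> nat" and J :: "nat set" and m n T :: nat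
  assumes J: "finite J" and m: "2 \<le> m" "m \<le> n" and T: "m - 2 \<le> T"
    and pos: "\<And>j. j \<in> J \<Longrightarrow> 0 < V j \<Longrightarrow> 0 < A j"
    and moving: "\<exists>j\<in>J. 0 < V j"
    and bound: "\<And>l. l \<in> J \<Longrightarrow> (\<Sum>j\<in>J. (A j - (m - 2)) * V j) + T + A l * V l \<le> (\<Sum>j\<in>J. A j * V j)"
    and recip: "(\<Sum>j\<in>{j \<in> J. 0 < V j}. 1 / real (A j)) \<le> 1 / (real n - 2)"
  shows False
proof -
  define J' where "J' = {j \<in> J. 0 < V j}"
  define Vs where "Vs = (\<Sum>j\<in>J. real (V j))"
  define K where "K = real (m - 2) * Vs - real T"
  have le_K: "real (A l) * real (V l) \<le> K" if "l \<in> J" for l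
    unfolding K_def Vs_def by (rule abc_bound_term_le[OF bound[OF that]])
  obtain l0 where l0: "l0 \<in> J" "0 < V l0" using moving by blast
  then have "1 \<le> A l0 * V l0" using pos[OF l0] by (simp add: Suc_le_eq)
  then have "1 \<le> real (A l0) * real (V l0)" by (metis of_nat_1 of_nat_le_iff of_nat_mult)
  then have K: "0 < K" using le_K[OF l0(1)] by linarith
  then have m3: "3 \<le> m" using m(1) unfolding K_def by (cases "m = 2") auto
  have "Vs = (\<Sum>j\<in>J'. real (V j))"
    unfolding Vs_def J'_def using J by (intro sum.mono_neutral_right) auto
  also have "\<dots> \<le> (\<Sum>j\<in>J'. K / real (A j))"
  proof (intro sum_mono)
    fix j assume "j \<in> J'"
    then have "0 < real (A j)" "real (A j) * real (V j) \<le> K" using pos le_K unfolding J'_def by auto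
    then show "real (V j) \<le> K / real (A j)" by (simp add: pos_le_divide_eq mult.commute)
  qed
  also have "\<dots> = K * (\<Sum>j\<in>J'. 1 / real (A j))" by (simp add: sum_distrib_left)
  also have "\<dots> \<le> K * (1 / (real m - 2))"
  proof (rule mult_left_mono)
    have "1 / (real n - 2) \<le> 1 / (real m - 2)" using m3 m(2) by (intro divide_left_mono) auto
    then show "(\<Sum>j\<in>J'. 1 / real (A j)) \<le> 1 / (real m - 2)" using recip unfolding J'_def by simp
  qed (use K in simp)
  finally have "(real m - 2) * Vs \<le> K" using m3 by (simp add: field_simps)
  then show False using T m3 unfolding K_def by (simp add: of_nat_diff)
qed

lemma pred_le_sum_lessThan: "m - 1 \<le> (\<Sum>i<m. i :: nat)"
  by (induction m) auto

section \<open>Divisibility inside a subring\<close>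

(* The quotient is required to lie in R, where D can be applied to it. *)
definition dvd_in :: "'a::comm_ring_1 set \<Rightarrow> 'a \<Rightarrow> 'a \<Rightarrow> bool" where
  "dvd_in R x y \<longleftrightarrow> (\<exists>q\<in>R. y = x * q)"

definition coprime_in :: "'a::comm_ring_1 set \<Rightarrow> 'a \<Rightarrow> 'a \<Rightarrow> bool" where
  "coprime_in R x y \<longleftrightarrow> (\<forall>w\<in>R. dvd_in R x (y * w) \<longrightarrow> dvd_in R x w)"

lemma unit_if_rel_prime_zero:
  assumes "rel_prime x (0::'a::idom)"
  shows "x dvd 1"
proof -
  have "x dvd 1 \<or> (0::'a) dvd 1" using assms unfolding rel_prime_def by blast
  then show ?thesis by simp
qed

lemma dvd_if_rel_prime_dvd_mult:
  fixes x y z :: "'a::idom"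
  assumes rp: "rel_prime x y" and "y \<noteq> 0" and "x dvd y * z"
  shows "x dvd z"
proof -
  obtain k where "y * z = x * k" using assms(3) by (elim dvdE)
  then have "y * z \<in> range (\<lambda>b. x * b) \<inter> range (\<lambda>b. y * b)" by (metis IntI rangeI)
  then obtain s where "y * z = x * y * s" using rp unfolding rel_prime_def by blast
  then have "y * z = y * (x * s)" by (simp add: ac_simps)
  then show ?thesis using \<open>y \<noteq> 0\<close> by simp
qed

locale subring_carrier =
  fixes R :: "'a::idom set"
  assumes subring: "subring R"
begin

lemma zero_closed: "0 \<in> R" and one_closed: "1 \<in> R"
  and add_closed: "x \<in> R \<Longrightarrow> y \<in> R \<Longrightarrow> x + y \<in> R"
  and diff_closed: "x \<in> R \<Longrightarrow> y \<in> R \<Longrightarrow> x - y \<in> R"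
  and mult_closed: "x \<in> R \<Longrightarrow> y \<in> R \<Longrightarrow> x * y \<in> R"
  using subring unfolding subring_def by auto

lemma uminus_closed: "x \<in> R \<Longrightarrow> - x \<in> R"
  using diff_closed[OF zero_closed] by fastforce

lemma power_closed: "x \<in> R \<Longrightarrow> x ^ k \<in> R"
  by (induction k) (auto intro: one_closed mult_closed)

lemma sum_closed: "(\<And>i. i \<in> S \<Longrightarrow> f i \<in> R) \<Longrightarrow> sum f S \<in> R"
  by (induction S rule: infinite_finite_induct) (auto intro: zero_closed add_closed)

lemma prod_closed: "(\<And>i. i \<in> S \<Longrightarrow> f i \<in> R) \<Longrightarrow> prod f S \<in> R"
  by (induction S rule: infinite_finite_induct) (auto intro: one_closed mult_closed)

lemma of_nat_closed: "of_nat k \<in> R"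
  by (induction k) (auto intro: zero_closed one_closed add_closed)

lemma signof_closed: "signof p \<in> R"
  by (simp add: sign_def one_closed uminus_closed)

lemma det_closed:
  assumes "A \<in> carrier_mat n n" and "\<And>i j. i < n \<Longrightarrow> j < n \<Longrightarrow> A $$ (i, j) \<in> R"
  shows "det A \<in> R"
  unfolding det_def'[OF assms(1)] using assms(2)
  by (intro sum_closed mult_closed signof_closed prod_closed) (auto dest: permutes_in_image)

lemma cofactor_closed:
  assumes "A \<in> carrier_mat n n" and "\<And>i j. i < n \<Longrightarrow> j < n \<Longrightarrow> A $$ (i, j) \<in> R"
  shows "cofactor A i j \<in> R"
  unfolding cofactor_def
proof (intro mult_closed power_closed uminus_closed one_closed det_closed)
  show "mat_delete A i j \<in> carrier_mat (n - 1) (n - 1)" using assms(1) by (rule mat_delete_carrier)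
qed (use assms in \<open>auto simp: mat_delete_def\<close>)

lemma dvd_in_refl: "x \<in> R \<Longrightarrow> dvd_in R x x"
  unfolding dvd_in_def using one_closed by force

lemma one_dvd_in: "w \<in> R \<Longrightarrow> dvd_in R 1 w"
  unfolding dvd_in_def by force

lemma dvd_in_zero: "dvd_in R x 0"
  unfolding dvd_in_def using zero_closed by force

lemma dvd_in_mult_right: "dvd_in R x w \<Longrightarrow> v \<in> R \<Longrightarrow> dvd_in R x (w * v)"
  unfolding dvd_in_def by (metis mult.assoc mult_closed)

lemma dvd_in_mult_left: "dvd_in R x w \<Longrightarrow> v \<in> R \<Longrightarrow> dvd_in R x (v * w)"
  using dvd_in_mult_right by (metis mult.commute)

lemma dvd_in_trans: "dvd_in R x y \<Longrightarrow> dvd_in R y w \<Longrightarrow> dvd_in R x w"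
  unfolding dvd_in_def by (metis mult.assoc mult_closed)

lemma dvd_in_add: "dvd_in R x a \<Longrightarrow> dvd_in R x b \<Longrightarrow> dvd_in R x (a + b)"
  unfolding dvd_in_def by (metis distrib_left add_closed)

lemma dvd_in_uminus: "dvd_in R x a \<Longrightarrow> dvd_in R x (- a)"
  unfolding dvd_in_def by (metis mult_minus_right uminus_closed)

lemma dvd_in_sum: "(\<And>i. i \<in> S \<Longrightarrow> dvd_in R x (f i)) \<Longrightarrow> dvd_in R x (sum f S)"
  by (induction S rule: infinite_finite_induct) (auto intro: dvd_in_zero dvd_in_add)

lemma dvd_in_power_mono: "x \<in> R \<Longrightarrow> k \<le> a \<Longrightarrow> dvd_in R (x ^ k) (x ^ a)"
  unfolding dvd_in_def by (rule bexI[of _ "x ^ (a - k)"]) (auto simp: power_closed power_add[symmetric])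

lemma det_dvd_in_row:
  assumes A: "A \<in> carrier_mat n n" and entries: "\<And>i j. i < n \<Longrightarrow> j < n \<Longrightarrow> A $$ (i, j) \<in> R"
    and k: "k < n" and row: "\<And>j. j < n \<Longrightarrow> dvd_in R x (A $$ (k, j))"
  shows "dvd_in R x (det A)"
  unfolding det_def'[OF A]
proof (intro dvd_in_sum dvd_in_mult_left signof_closed)
  fix p assume "p \<in> {p. p permutes {0..<n}}"
  then have p: "\<And>i. i < n \<Longrightarrow> p i < n" by (auto dest: permutes_in_image)
  have "(\<Prod>i = 0..<n. A $$ (i, p i)) = A $$ (k, p k) * (\<Prod>i\<in>{0..<n} - {k}. A $$ (i, p i))"
    using k by (intro prod.remove) auto
  moreover have "(\<Prod>i\<in>{0..<n} - {k}. A $$ (i, p i)) \<in> R"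
    using entries p by (intro prod_closed) auto
  ultimately show "dvd_in R x (\<Prod>i = 0..<n. A $$ (i, p i))"
    using row p k by (simp add: dvd_in_mult_right)
qed

lemma coprime_inD: "coprime_in R x y \<Longrightarrow> w \<in> R \<Longrightarrow> dvd_in R x (y * w) \<Longrightarrow> dvd_in R x w"
  unfolding coprime_in_def by blast

lemma coprime_in_one_left: "coprime_in R 1 y"
  unfolding coprime_in_def using one_dvd_in by blast

lemma coprime_in_one_right: "coprime_in R x 1"
  unfolding coprime_in_def by simp

lemma coprime_in_mult_right:
  assumes "coprime_in R x y" "coprime_in R x z" "y \<in> R" "z \<in> R"
  shows "coprime_in R x (y * z)"
  unfolding coprime_in_def
proof (intro ballI impI)
  fix w assume w: "w \<in> R" and "dvd_in R x (y * z * w)"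
  then have "dvd_in R x (z * w)"
    using coprime_inD[OF assms(1) mult_closed[OF assms(4) w]] by (simp add: mult.assoc)
  then show "dvd_in R x w" using coprime_inD[OF assms(2) w] by simp
qed

lemma coprime_in_prod_right:
  "finite S \<Longrightarrow> (\<And>j. j \<in> S \<Longrightarrow> coprime_in R x (f j) \<and> f j \<in> R) \<Longrightarrow> coprime_in R x (prod f S)"
  by (induction S rule: finite_induct)
    (simp_all add: coprime_in_one_right coprime_in_mult_right prod_closed)

lemma coprime_in_power_right: "coprime_in R x y \<Longrightarrow> y \<in> R \<Longrightarrow> coprime_in R x (y ^ b)"
  using coprime_in_prod_right[of "{..<b}" x "\<lambda>_. y"] by simp

lemma coprime_in_power_left:
  assumes xy: "coprime_in R x y" and x: "x \<in> R" "x \<noteq> 0"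
  shows "coprime_in R (x ^ a) y"
proof (induction a)
  case 0 then show ?case by (simp add: coprime_in_one_left)
next
  case (Suc a)
  show ?case unfolding coprime_in_def
  proof (intro ballI impI)
    fix w assume w: "w \<in> R" and "dvd_in R (x ^ Suc a) (y * w)"
    then obtain q where q: "q \<in> R" "y * w = x * (x ^ a * q)"
      unfolding dvd_in_def by (auto simp: mult.assoc)
    then have "dvd_in R x w"
      using coprime_inD[OF xy w] x by (metis dvd_in_def mult_closed power_closed)
    then obtain w' where w': "w' \<in> R" "w = x * w'" unfolding dvd_in_def by blast
    then have "y * w' = x ^ a * q" using q x by (simp add: algebra_simps)
    then have "dvd_in R (x ^ a) w'"
      using coprime_inD[OF Suc.IH w'(1)] q(1) unfolding dvd_in_def by blast
    then show "dvd_in R (x ^ Suc a) w" using w' unfolding dvd_in_def by auto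
  qed
qed

lemma dvd_in_mult_if_coprime:
  assumes "dvd_in R x w" "dvd_in R y w" "coprime_in R x y"
  shows "dvd_in R (x * y) w"
proof -
  obtain q where q: "q \<in> R" "w = y * q" using assms(2) unfolding dvd_in_def by auto
  then have "dvd_in R x q" using coprime_inD[OF assms(3)] assms(1) by simp
  then show ?thesis using q unfolding dvd_in_def by (auto simp: ac_simps)
qed

lemma dvd_in_prod_if_pairwise_coprime:
  "finite S \<Longrightarrow> (\<And>i. i \<in> S \<Longrightarrow> f i \<in> R \<and> dvd_in R (f i) w) \<Longrightarrow>
   (\<And>i j. i \<in> S \<Longrightarrow> j \<in> S \<Longrightarrow> i \<noteq> j \<Longrightarrow> coprime_in R (f i) (f j)) \<Longrightarrow> w \<in> R \<Longrightarrow>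
   dvd_in R (prod f S) w"
proof (induction S rule: finite_induct)
  case empty then show ?case by (simp add: one_dvd_in)
next
  case (insert i S)
  have "coprime_in R (f i) (prod f S)" using insert by (intro coprime_in_prod_right) auto
  then show ?case using insert by (simp add: dvd_in_mult_if_coprime)
qed

lemma unit_if_coprime_in_zero: "coprime_in R x 0 \<Longrightarrow> \<exists>v\<in>R. x * v = 1"
  using coprime_inD[of x 0 1] one_closed dvd_in_zero unfolding dvd_in_def by force

lemma coprime_in_if_rel_prime:
  assumes fc: "factorially_closed R" and rp: "rel_prime x y"
  shows "coprime_in R x y"
  unfolding coprime_in_def
proof (intro ballI impI)
  fix w assume w: "w \<in> R" and dvd: "dvd_in R x (y * w)"
  show "dvd_in R x w"
  proof (cases "y = 0")
    case True
    then have "x dvd 1" using unit_if_rel_prime_zero[of x] rp by simp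
    then obtain v where v: "x * v = 1" by (metis dvdE)
    then have "v \<in> R" using fc one_closed unfolding factorially_closed_def by (metis mult_eq_0_iff one_neq_zero)
    moreover have "w = x * (v * w)" using v by (simp flip: mult.assoc)
    ultimately show ?thesis unfolding dvd_in_def using w mult_closed by blast
  next
    case False
    obtain q where "y * w = x * q" using dvd unfolding dvd_in_def by blast
    then have "x dvd w" using dvd_if_rel_prime_dvd_mult[OF rp False] by (metis dvdI)
    then obtain s where ws: "w = x * s" by (auto elim: dvdE)
    show ?thesis
    proof (cases "w = 0")
      case False
      then have "s \<in> R" using fc w ws unfolding factorially_closed_def by auto
      then show ?thesis using ws unfolding dvd_in_def by blast
    qed (simp add: dvd_in_zero)
  qed
qed

end

section \<open>Locally nilpotent derivations and their degree\<close>

locale lnd = subring_carrier R for R :: "'a::{idom, ring_char_0} set" +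
  fixes D :: "'a \<Rightarrow> 'a"
  assumes lnd: "lnd_on R D"
begin

lemma D_closed: "a \<in> R \<Longrightarrow> D a \<in> R"
  and D_add: "a \<in> R \<Longrightarrow> b \<in> R \<Longrightarrow> D (a + b) = D a + D b"
  and D_mult: "a \<in> R \<Longrightarrow> b \<in> R \<Longrightarrow> D (a * b) = a * D b + b * D a"
  and locally_nilpotent: "a \<in> R \<Longrightarrow> \<exists>k. (D ^^ k) a = 0"
  using lnd unfolding lnd_on_def derivation_on_def by auto

lemma D_zero: "D 0 = 0"
  using D_add[OF zero_closed zero_closed] by simp

lemma D_one: "D 1 = 0"
  using D_mult[OF one_closed one_closed] by simp

lemma D_uminus: "a \<in> R \<Longrightarrow> D (- a) = - D a"
  using D_add[of a "- a"] uminus_closed[of a] D_zero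
  by (simp add: eq_neg_iff_add_eq_0 add.commute)

lemma D_diff: "a \<in> R \<Longrightarrow> b \<in> R \<Longrightarrow> D (a - b) = D a - D b"
  using D_add[of a "- b"] uminus_closed[of b] D_uminus[of b] by simp

lemma D_sum: "(\<And>i. i \<in> S \<Longrightarrow> f i \<in> R) \<Longrightarrow> D (sum f S) = (\<Sum>i\<in>S. D (f i))"
  by (induction S rule: infinite_finite_induct) (simp_all add: D_zero D_add sum_closed)

lemma D_power: "a \<in> R \<Longrightarrow> D (a ^ Suc k) = of_nat (Suc k) * a ^ k * D a"
proof (induction k)
  case (Suc k)
  have "D (a ^ Suc (Suc k)) = D (a * a ^ Suc k)" by (simp only: power_Suc)
  also have "\<dots> = a * D (a ^ Suc k) + a ^ Suc k * D a"
    using Suc.prems power_closed by (simp only: D_mult)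
  finally show ?case using Suc by (simp add: algebra_simps)
qed simp

definition ker :: "'a set" where
  "ker = {c \<in> R. D c = 0}"

lemma ker_closed: "c \<in> ker \<Longrightarrow> c \<in> R" and D_ker: "c \<in> ker \<Longrightarrow> D c = 0"
  unfolding ker_def by auto

lemma zero_ker: "0 \<in> ker" and one_ker: "1 \<in> ker"
  unfolding ker_def by (simp_all add: zero_closed one_closed D_zero D_one)

lemma ker_mult: "c \<in> ker \<Longrightarrow> d \<in> ker \<Longrightarrow> c * d \<in> ker"
  unfolding ker_def by (simp add: mult_closed D_mult)

lemma ker_power: "c \<in> ker \<Longrightarrow> c ^ k \<in> ker"
  by (induction k) (simp_all add: one_ker ker_mult)

lemma ker_sum: "(\<And>i. i \<in> S \<Longrightarrow> f i \<in> ker) \<Longrightarrow> sum f S \<in> ker"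
  unfolding ker_def by (simp add: sum_closed D_sum)

lemma D_mult_ker: "c \<in> ker \<Longrightarrow> a \<in> R \<Longrightarrow> D (c * a) = c * D a"
  unfolding ker_def by (simp add: D_mult)

lemma iterD_closed: "a \<in> R \<Longrightarrow> (D ^^ k) a \<in> R"
  by (induction k) (auto simp: D_closed)

lemma iterD_zero: "(D ^^ k) 0 = 0"
  by (induction k) (auto simp: D_zero)

lemma iterD_add: "a \<in> R \<Longrightarrow> b \<in> R \<Longrightarrow> (D ^^ k) (a + b) = (D ^^ k) a + (D ^^ k) b"
  by (induction k) (auto simp: D_add iterD_closed)

lemma iterD_uminus: "a \<in> R \<Longrightarrow> (D ^^ k) (- a) = - (D ^^ k) a"
  by (induction k) (auto simp: D_uminus iterD_closed)

lemma iterD_diff: "a \<in> R \<Longrightarrow> b \<in> R \<Longrightarrow> (D ^^ k) (a - b) = (D ^^ k) a - (D ^^ k) b"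
  by (induction k) (auto simp: D_diff iterD_closed)

lemma iterD_sum:
  "(\<And>i. i \<in> S \<Longrightarrow> f i \<in> R) \<Longrightarrow> (D ^^ k) (sum f S) = (\<Sum>i\<in>S. (D ^^ k) (f i))"
  by (induction k) (auto simp: D_sum iterD_closed)

lemma iterD_mult_ker: "c \<in> ker \<Longrightarrow> a \<in> R \<Longrightarrow> (D ^^ k) (c * a) = c * (D ^^ k) a"
  by (induction k) (auto simp: D_mult_ker iterD_closed)

definition deg :: "'a \<Rightarrow> nat" where
  "deg a = (LEAST k. (D ^^ Suc k) a = 0)"

definition lead :: "'a \<Rightarrow> 'a" where
  "lead a = (D ^^ deg a) a"

lemma iterD_Suc_deg: "a \<in> R \<Longrightarrow> (D ^^ Suc (deg a)) a = 0"
  unfolding deg_def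
proof (rule LeastI_ex)
  assume "a \<in> R"
  then obtain k where "(D ^^ k) a = 0" using locally_nilpotent by blast
  then show "\<exists>k. (D ^^ Suc k) a = 0" by (intro exI[of _ k]) (simp add: D_zero)
qed

lemma deg_le: "(D ^^ Suc k) a = 0 \<Longrightarrow> deg a \<le> k"
  unfolding deg_def by (rule Least_le)

lemma iterD_above_deg:
  assumes "a \<in> R" "deg a < k"
  shows "(D ^^ k) a = 0"
proof -
  have "(D ^^ k) a = (D ^^ (k - Suc (deg a) + Suc (deg a))) a" using assms(2) by simp
  also have "\<dots> = (D ^^ (k - Suc (deg a))) ((D ^^ Suc (deg a)) a)" by (simp only: funpow_add o_apply)
  finally show ?thesis using iterD_Suc_deg[OF assms(1)] by (simp add: iterD_zero del: funpow.simps)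
qed

lemma deg_le_iff: "a \<in> R \<Longrightarrow> deg a \<le> k \<longleftrightarrow> (D ^^ Suc k) a = 0"
  by (meson deg_le iterD_above_deg le_imp_less_Suc)

lemma deg_eq_0_iff: "a \<in> R \<Longrightarrow> deg a = 0 \<longleftrightarrow> D a = 0"
  using deg_le_iff[of a 0] by simp

lemma deg_ker: "c \<in> ker \<Longrightarrow> deg c = 0"
  using deg_eq_0_iff ker_def by auto

lemma deg_one: "deg 1 = 0"
  using deg_ker[OF one_ker] .

lemma lead_nonzero:
  assumes "a \<in> R" "a \<noteq> 0"
  shows "lead a \<noteq> 0"
proof (cases "deg a")
  case 0
  then show ?thesis using assms(2) by (simp add: lead_def)
next
  case (Suc k)
  then show ?thesis using deg_le[of k a] unfolding lead_def by auto
qed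

lemma lead_ker: "a \<in> R \<Longrightarrow> lead a \<in> ker"
  unfolding lead_def ker_def using iterD_Suc_deg iterD_closed by simp

lemma lead_ker_eq: "c \<in> ker \<Longrightarrow> lead c = c"
  unfolding lead_def by (simp add: deg_ker)

lemma deg_eqI: "a \<in> R \<Longrightarrow> (D ^^ k) a \<noteq> 0 \<Longrightarrow> (D ^^ Suc k) a = 0 \<Longrightarrow> deg a = k"
  using deg_le iterD_above_deg by (meson le_neq_implies_less)

lemma iterD_nonzero:
  assumes "a \<in> R" "a \<noteq> 0" "k \<le> deg a"
  shows "(D ^^ k) a \<noteq> 0"
proof
  assume "(D ^^ k) a = 0"
  moreover have "lead a = (D ^^ (deg a - k + k)) a"
    unfolding lead_def using assms(3) by simp
  then have "lead a = (D ^^ (deg a - k)) ((D ^^ k) a)" by (simp add: funpow_add)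
  ultimately show False using lead_nonzero[OF assms(1,2)] by (simp add: iterD_zero)
qed

lemma deg_iterD:
  assumes "a \<in> R" "a \<noteq> 0" "k \<le> deg a"
  shows "deg ((D ^^ k) a) = deg a - k" and "lead ((D ^^ k) a) = lead a"
proof -
  have split: "(D ^^ j) ((D ^^ k) a) = (D ^^ (j + k)) a" for j by (simp add: funpow_add)
  show deg: "deg ((D ^^ k) a) = deg a - k"
    using assms split[of "deg a - k"] split[of "Suc (deg a - k)"] iterD_nonzero[of a "deg a"]
      iterD_Suc_deg[of a] iterD_closed
    by (intro deg_eqI) (simp_all add: Suc_diff_le)
  show "lead ((D ^^ k) a) = lead a"
    unfolding lead_def deg split using assms(3) by simp
qed

lemma deg_D:
  assumes "a \<in> R" "D a \<noteq> 0"
  shows "deg (D a) = deg a - 1" "lead (D a) = lead a" "1 \<le> deg a"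
  using deg_iterD[of a 1] assms deg_eq_0_iff[of a] D_zero by fastforce+

lemma deg_uminus: "a \<in> R \<Longrightarrow> deg (- a) = deg a"
  using deg_le_iff[of a] deg_le_iff[of "- a"] uminus_closed[of a] iterD_uminus[of a]
  by (metis le_antisym neg_equal_0_iff_equal order_refl)

lemma deg_add_le: "a \<in> R \<Longrightarrow> b \<in> R \<Longrightarrow> deg (a + b) \<le> max (deg a) (deg b)"
  using iterD_above_deg[of a] iterD_above_deg[of b] iterD_add[of a b]
  by (intro deg_le) (simp del: funpow.simps)

lemma iterD_mult_deg:
  assumes "a \<in> R" "b \<in> R" "a \<noteq> 0" "b \<noteq> 0" "deg a + deg b = N"
  shows "(D ^^ N) (a * b) = of_nat (N choose deg a) * (lead a * lead b)
    \<and> (D ^^ Suc N) (a * b) = 0"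
  using assms
proof (induction N arbitrary: a b)
  case 0
  then have "a \<in> ker" "b \<in> ker" using deg_eq_0_iff ker_def by auto
  then show ?case by (simp add: ker_mult D_ker lead_ker_eq deg_ker)
next
  case (Suc N)
  consider "a \<in> ker" | "b \<in> ker" | "D a \<noteq> 0" "D b \<noteq> 0"
    using Suc.prems ker_def by blast
  then show ?case
  proof cases
    case 1
    then show ?thesis
      using Suc.prems iterD_above_deg[of b "Suc (Suc N)"]
      by (simp add: iterD_mult_ker deg_ker lead_ker_eq lead_def del: funpow.simps)
  next
    case 2
    have "(D ^^ k) (a * b) = b * (D ^^ k) a" for k
      using iterD_mult_ker[OF 2 Suc.prems(1)] by (simp add: mult.commute)
    then show ?thesis
      using Suc.prems 2 iterD_above_deg[of a "Suc (Suc N)"]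
      by (simp add: deg_ker lead_ker_eq lead_def del: funpow.simps)
  next
    case 3
    note a = deg_D[OF Suc.prems(1) 3(1)] and b = deg_D[OF Suc.prems(2) 3(2)]
    have IH1: "(D ^^ N) (a * D b) = of_nat (N choose deg a) * (lead a * lead b)
        \<and> (D ^^ Suc N) (a * D b) = 0"
      using Suc.IH[of a "D b"] Suc.prems 3 b D_closed by (simp del: funpow.simps)
    have IH2: "(D ^^ N) (D a * b) = of_nat (N choose (deg a - 1)) * (lead a * lead b)
        \<and> (D ^^ Suc N) (D a * b) = 0"
      using Suc.IH[of "D a" b] Suc.prems 3 a D_closed by (simp del: funpow.simps)
    have step: "(D ^^ Suc k) (a * b) = (D ^^ k) (a * D b) + (D ^^ k) (D a * b)" for k
      using Suc.prems by (simp only: funpow_Suc_right o_apply D_mult iterD_add mult_closed D_closed)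
        (simp add: mult.commute)
    have "Suc N choose deg a = (N choose deg a) + (N choose (deg a - 1))"
      using a(3) by (cases "deg a") auto
    then have "(D ^^ Suc N) (a * b) = of_nat (Suc N choose deg a) * (lead a * lead b)"
      using IH1 IH2 step[of N] by (simp add: algebra_simps del: funpow.simps)
    moreover have "(D ^^ Suc (Suc N)) (a * b) = 0"
      using IH1 IH2 step[of "Suc N"] by (simp del: funpow.simps)
    ultimately show ?thesis by blast
  qed
qed

lemma deg_mult:
  assumes "a \<in> R" "b \<in> R" "a \<noteq> 0" "b \<noteq> 0"
  shows "deg (a * b) = deg a + deg b"
proof (rule deg_eqI)
  note top = iterD_mult_deg[OF assms refl]
  show "(D ^^ (deg a + deg b)) (a * b) \<noteq> 0" using top lead_nonzero assms by simp
  show "(D ^^ Suc (deg a + deg b)) (a * b) = 0" using top by blast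
qed (simp add: mult_closed assms)

lemma deg_power: "a \<in> R \<Longrightarrow> a \<noteq> 0 \<Longrightarrow> deg (a ^ k) = k * deg a"
  by (induction k) (simp_all add: deg_mult power_closed deg_one)

lemma deg_prod:
  "finite S \<Longrightarrow> (\<And>i. i \<in> S \<Longrightarrow> f i \<in> R \<and> f i \<noteq> 0) \<Longrightarrow> deg (prod f S) = (\<Sum>i\<in>S. deg (f i))"
  by (induction S rule: finite_induct) (simp_all add: deg_one deg_mult prod_closed)

lemma deg_le_if_dvd_in: "dvd_in R x w \<Longrightarrow> x \<in> R \<Longrightarrow> w \<noteq> 0 \<Longrightarrow> deg x \<le> deg w"
  unfolding dvd_in_def by (auto simp: deg_mult)

lemma deg_sum_bound:
  "(\<And>s. s \<in> S \<Longrightarrow> f s \<in> R \<and> (f s = 0 \<or> deg (f s) + T \<le> B)) \<Longrightarrow>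
   sum f S = 0 \<or> deg (sum f S) + T \<le> B"
proof (induction S rule: infinite_finite_induct)
  case (insert s S)
  then have "sum f S \<in> R" by (auto intro: sum_closed)
  then show ?case using insert deg_add_le[of "f s" "sum f S"] by fastforce
qed simp_all

lemma unit_ker: "u \<in> R \<Longrightarrow> v \<in> R \<Longrightarrow> u * v = 1 \<Longrightarrow> D u = 0"
  using deg_mult[of u v] deg_one deg_eq_0_iff[of u] by force

lemma ker_factor:
  "a \<in> R \<Longrightarrow> b \<in> R \<Longrightarrow> a \<noteq> 0 \<Longrightarrow> b \<noteq> 0 \<Longrightarrow> D (a * b) = 0 \<Longrightarrow> D a = 0"
  using deg_mult[of a b] deg_eq_0_iff[of a] deg_eq_0_iff[of "a * b"] mult_closed by simp


lemma deg_eq_if_ratio_constant: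
  "f \<in> R \<Longrightarrow> h \<in> R \<Longrightarrow> f \<noteq> 0 \<Longrightarrow> h \<noteq> 0 \<Longrightarrow> f * D h = h * D f \<Longrightarrow> deg f = deg h"
proof (induction "deg f" arbitrary: f h rule: less_induct)
  case less
  note fh = less.prems(1,2) and nz = less.prems(3,4) and eq = less.prems(5)
  show ?case
  proof (cases "D f = 0 \<or> D h = 0")
    case True
    then have "D f = 0" "D h = 0" using eq nz by auto
    then have "deg f = 0" "deg h = 0" using fh deg_eq_0_iff by auto
    then show ?thesis by simp
  next
    case False
    have "D (f * D h) = D (h * D f)" using eq by simp
    then have eq2: "f * D (D h) = h * D (D f)"
      using fh by (simp add: D_mult D_closed mult.commute)
    have "f * (D f * D (D h)) = D f * (h * D (D f))" using eq2 by (simp add: ac_simps)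
    also have "\<dots> = (f * D h) * D (D f)" using eq by (simp add: ac_simps)
    finally have "D f * D (D h) = D h * D (D f)" using nz by (simp add: ac_simps)
    moreover have "deg f = Suc (deg (D f))" "deg h = Suc (deg (D h))"
      using deg_D[of f] deg_D[of h] False fh by auto
    ultimately show ?thesis
      using less.hyps[of "D f" "D h"] False fh D_closed by simp
  qed
qed

lemma ratio_constant_ker:
  assumes f: "f \<in> R" "f \<noteq> 0" and g: "g \<in> R" and eq: "f * D g = g * D f"
  shows "(D ^^ deg f) g \<in> ker" and "lead f * g = (D ^^ deg f) g * f"
proof -
  define \<beta> where "\<beta> = (D ^^ deg f) g"
  show \<beta>: "(D ^^ deg f) g \<in> ker"
  proof (cases "g = 0")
    case True then show ?thesis by (simp add: iterD_zero zero_ker)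
  next
    case False
    then show ?thesis
      using deg_eq_if_ratio_constant[OF f(1) g f(2) False eq] iterD_Suc_deg[OF g] iterD_closed[OF g]
      unfolding ker_def by simp
  qed
  have \<alpha>: "lead f \<in> ker" using lead_ker[OF f(1)] .
  define h where "h = lead f * g - \<beta> * f"
  have hR: "h \<in> R"
    unfolding h_def \<beta>_def using \<alpha> \<beta> f g ker_closed by (auto intro!: diff_closed mult_closed)
  have Dh: "D h = lead f * D g - \<beta> * D f"
    unfolding h_def \<beta>_def using \<alpha> \<beta> f g by (simp add: D_diff mult_closed ker_closed D_mult_ker)
  have "f * D h = lead f * (f * D g) - \<beta> * (f * D f)" unfolding Dh by (simp add: algebra_simps)
  also have "\<dots> = h * D f" unfolding eq h_def by (simp add: algebra_simps)
  finally have eqh: "f * D h = h * D f" .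
  have "lead h = 0 \<or> h = 0"
  proof (cases "h = 0")
    case False
    then have "lead h = (D ^^ deg f) h"
      using deg_eq_if_ratio_constant[OF f(1) hR f(2) False eqh] unfolding lead_def by simp
    also have "\<dots> = lead f * \<beta> - \<beta> * (D ^^ deg f) f"
      unfolding h_def using \<alpha> \<beta> f g ker_closed
      by (simp add: iterD_diff mult_closed iterD_mult_ker \<beta>_def)
    finally show ?thesis by (simp add: lead_def)
  qed simp
  then have "h = 0" using lead_nonzero[OF hR] by blast
  then show "lead f * g = (D ^^ deg f) g * f" unfolding h_def \<beta>_def by simp
qed


subsection \<open>Wronskians\<close>

definition wronskian_mat :: "nat \<Rightarrow> (nat \<Rightarrow> 'a) \<Rightarrow> 'a mat" where
  "wronskian_mat m g = mat m m (\<lambda>(j, i). (D ^^ i) (g j))"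

definition wronskian :: "nat \<Rightarrow> (nat \<Rightarrow> 'a) \<Rightarrow> 'a" where
  "wronskian m g = det (wronskian_mat m g)"

lemma wronskian_mat_carrier: "wronskian_mat m g \<in> carrier_mat m m"
  and wronskian_mat_index: "j < m \<Longrightarrow> i < m \<Longrightarrow> wronskian_mat m g $$ (j, i) = (D ^^ i) (g j)"
  unfolding wronskian_mat_def by simp_all

lemma wronskian_closed: "(\<And>j. j < m \<Longrightarrow> g j \<in> R) \<Longrightarrow> wronskian m g \<in> R"
  unfolding wronskian_def
  by (rule det_closed[OF wronskian_mat_carrier]) (simp add: wronskian_mat_index iterD_closed)

lemma dvd_in_wronskian:
  assumes "\<And>j. j < m \<Longrightarrow> g j \<in> R" "l < m" "\<And>i. i < m \<Longrightarrow> dvd_in R z ((D ^^ i) (g l))"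
  shows "dvd_in R z (wronskian m g)"
  unfolding wronskian_def using assms
  by (intro det_dvd_in_row[OF wronskian_mat_carrier]) (auto simp: wronskian_mat_index iterD_closed)

lemma deg_iterD_prod:
  assumes p: "p permutes {0..<m}" and g: "\<And>j. j < m \<Longrightarrow> g j \<in> R"
    and nz: "(\<Prod>j = 0..<m. (D ^^ p j) (g j)) \<noteq> 0"
  shows "deg (\<Prod>j = 0..<m. (D ^^ p j) (g j)) + (\<Sum>i<m. i) = (\<Sum>j<m. deg (g j))"
proof -
  have factor_nz: "(D ^^ p j) (g j) \<noteq> 0" if "j < m" for j using nz that by auto
  have g_nz: "g j \<noteq> 0" if "j < m" for j using factor_nz[OF that] iterD_zero by auto
  have p_le: "p j \<le> deg (g j)" if "j < m" for j
    using factor_nz[OF that] iterD_above_deg[OF g[OF that], of "p j"] by (meson not_le)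
  have "deg (\<Prod>j = 0..<m. (D ^^ p j) (g j)) = (\<Sum>j = 0..<m. deg ((D ^^ p j) (g j)))"
    using factor_nz g by (intro deg_prod) (auto intro: iterD_closed)
  also have "\<dots> = (\<Sum>j = 0..<m. deg (g j) - p j)"
    using g g_nz p_le by (intro sum.cong) (auto simp: deg_iterD)
  finally have "deg (\<Prod>j = 0..<m. (D ^^ p j) (g j)) = (\<Sum>j = 0..<m. deg (g j) - p j)" .
  moreover have "(\<Sum>j = 0..<m. p j) = (\<Sum>j = 0..<m. j)"
    using sum.permute[OF p, of "\<lambda>j. j"] by (simp add: comp_def)
  moreover have "(\<Sum>j = 0..<m. deg (g j) - p j) + (\<Sum>j = 0..<m. p j) = (\<Sum>j = 0..<m. deg (g j))"
    using p_le by (simp flip: sum.distrib)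
  ultimately show ?thesis by (simp add: atLeast0LessThan)
qed

lemma deg_wronskian_le:
  assumes g: "\<And>j. j < m \<Longrightarrow> g j \<in> R" and nz: "wronskian m g \<noteq> 0"
  shows "deg (wronskian m g) + (\<Sum>i<m. i) \<le> (\<Sum>j<m. deg (g j))"
proof -
  have "wronskian m g = (\<Sum>p\<in>{p. p permutes {0..<m}}. signof p * (\<Prod>j = 0..<m. (D ^^ p j) (g j)))"
    unfolding wronskian_def det_def'[OF wronskian_mat_carrier]
    by (intro sum.cong prod.cong) (auto simp: wronskian_mat_index dest: permutes_in_image)
  also have "\<dots> = 0 \<or> deg \<dots> + (\<Sum>i<m. i) \<le> (\<Sum>j<m. deg (g j))"
  proof (rule deg_sum_bound)
    have signed: "c * P \<in> R \<and> (c * P = 0 \<or> deg (c * P) + T \<le> B)"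
      if "P \<in> R" "P = 0 \<or> deg P + T \<le> B" "c = 1 \<or> c = -1" for c P T B
      using that deg_uminus uminus_closed by auto
    fix p assume "p \<in> {p. p permutes {0..<m}}"
    then have p: "p permutes {0..<m}" by simp
    show "signof p * (\<Prod>j = 0..<m. (D ^^ p j) (g j)) \<in> R \<and>
        (signof p * (\<Prod>j = 0..<m. (D ^^ p j) (g j)) = 0 \<or>
         deg (signof p * (\<Prod>j = 0..<m. (D ^^ p j) (g j))) + (\<Sum>i<m. i) \<le> (\<Sum>j<m. deg (g j)))"
    proof (rule signed)
      show "(\<Prod>j = 0..<m. (D ^^ p j) (g j)) \<in> R" using g by (intro prod_closed iterD_closed) auto
      show "signof p = 1 \<or> signof p = (-1 :: 'a)" by (simp add: sign_def)
      show "(\<Prod>j = 0..<m. (D ^^ p j) (g j)) = 0 \<or>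
          deg (\<Prod>j = 0..<m. (D ^^ p j) (g j)) + (\<Sum>i<m. i) \<le> (\<Sum>j<m. deg (g j))"
        using deg_iterD_prod[of p m g, OF p g] by (metis eq_imp_le)
    qed
  qed
  finally show ?thesis using nz by simp
qed


definition ker_relation :: "nat set \<Rightarrow> (nat \<Rightarrow> 'a) \<Rightarrow> (nat \<Rightarrow> 'a) \<Rightarrow> bool" where
  "ker_relation I g c \<longleftrightarrow> (\<forall>s\<in>I. c s \<in> ker) \<and> (\<Sum>s\<in>I. c s * g s) = 0"

definition ker_independent :: "nat set \<Rightarrow> (nat \<Rightarrow> 'a) \<Rightarrow> bool" where
  "ker_independent I g \<longleftrightarrow> (\<forall>c. ker_relation I g c \<longrightarrow> (\<forall>s\<in>I. c s = 0))"

lemma ker_independent_subset: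
  assumes "ker_independent I g" "J \<subseteq> I" "finite I"
  shows "ker_independent J g"
  unfolding ker_independent_def
proof (intro allI impI ballI)
  fix c s assume rel: "ker_relation J g c" and s: "s \<in> J"
  define c' where "c' t = (if t \<in> J then c t else 0)" for t
  have "(\<Sum>t\<in>I. c' t * g t) = (\<Sum>t\<in>J. c' t * g t)"
    using assms(2,3) by (intro sum.mono_neutral_right) (auto simp: c'_def)
  also have "\<dots> = (\<Sum>t\<in>J. c t * g t)" by (intro sum.cong) (auto simp: c'_def)
  finally have "ker_relation I g c'" using rel zero_ker unfolding ker_relation_def c'_def by auto
  then have "c' s = 0" using assms(1,2) s unfolding ker_independent_def by blast
  then show "c s = 0" using s by (simp add: c'_def)
qed

lemma ker_independent_reindex:
  assumes e: "bij_betw e J I" and indep: "ker_independent I g"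
  shows "ker_independent J (g \<circ> e)"
  unfolding ker_independent_def
proof (intro allI impI ballI)
  fix d j assume rel: "ker_relation J (g \<circ> e) d" and j: "j \<in> J"
  define d' where "d' = d \<circ> inv_into J e"
  have d'e: "d' (e t) = d t" if "t \<in> J" for t
    using e that unfolding d'_def by (simp add: bij_betw_inv_into_left)
  have "(\<Sum>s\<in>I. d' s * g s) = (\<Sum>t\<in>J. d t * g (e t))"
    using sum.reindex_bij_betw[OF e, of "\<lambda>s. d' s * g s"] d'e by simp
  moreover have "d' s \<in> ker" if "s \<in> I" for s
    using rel that e unfolding d'_def ker_relation_def by (auto simp: bij_betw_def inv_into_into)
  ultimately have "ker_relation I g d'" using rel unfolding ker_relation_def by simp
  then show "d j = 0" using indep e j d'e unfolding ker_independent_def by (metis bij_betwE)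
qed

lemma minimal_ker_relation:
  assumes I: "finite I" and rel: "ker_relation I G c" and nontrivial: "\<exists>s\<in>I. c s \<noteq> 0"
  obtains c' where "ker_relation I G c'" "{s \<in> I. c' s \<noteq> 0} \<noteq> {}"
    "card {s \<in> I. c' s \<noteq> 0} \<le> card {s \<in> I. c s \<noteq> 0}"
    "\<And>s0. s0 \<in> I \<Longrightarrow> c' s0 \<noteq> 0 \<Longrightarrow>
      ker_independent ({s \<in> I. c' s \<noteq> 0} - {s0}) (\<lambda>s. c' s * G s)"
proof -
  let ?supp = "\<lambda>c. {s \<in> I. c s \<noteq> 0}"
  let ?P = "\<lambda>c. ker_relation I G c \<and> ?supp c \<noteq> {}"
  obtain c' where c': "?P c'" and min: "\<And>d. ?P d \<Longrightarrow> card (?supp c') \<le> card (?supp d)"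
    using ex_has_least_nat[of ?P c "\<lambda>c. card (?supp c)"] rel nontrivial by blast
  have "ker_independent (?supp c' - {s0}) (\<lambda>s. c' s * G s)" if s0: "s0 \<in> I" "c' s0 \<noteq> 0" for s0
    unfolding ker_independent_def
  proof (intro allI impI ballI)
    fix d s assume d: "ker_relation (?supp c' - {s0}) (\<lambda>s. c' s * G s) d"
      and s: "s \<in> ?supp c' - {s0}"
    \<comment> \<open>A relation among the other terms yields one of smaller support.\<close>
    define d' where "d' t = (if t \<in> ?supp c' - {s0} then d t * c' t else 0)" for t
    have "(\<Sum>t\<in>I. d' t * G t) = (\<Sum>t\<in>?supp c' - {s0}. d' t * G t)"
      using I by (intro sum.mono_neutral_right) (auto simp: d'_def)
    also have "\<dots> = (\<Sum>t\<in>?supp c' - {s0}. d t * (c' t * G t))"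
      by (intro sum.cong) (auto simp: d'_def mult.assoc)
    finally have "ker_relation I G d'"
      using d c' zero_ker unfolding ker_relation_def d'_def by (auto intro: ker_mult)
    moreover have "card (?supp d') < card (?supp c')"
    proof -
      have "?supp d' \<subseteq> ?supp c' - {s0}" by (auto simp: d'_def)
      then have "card (?supp d') \<le> card (?supp c' - {s0})" using I by (intro card_mono) auto
      also have "\<dots> < card (?supp c')" using I s0 by (intro card_Diff1_less) auto
      finally show ?thesis .
    qed
    ultimately have "?supp d' = {}" using min[of d'] by fastforce
    then show "d s = 0" using s by (auto simp: d'_def)
  qed
  then show ?thesis using that c' min[of c] rel nontrivial by blast
qed


lemma wronskian_null_vector_ratios:
  assumes g: "\<And>j. j < Suc m \<Longrightarrow> g j \<in> R" and W: "wronskian m g \<noteq> 0"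
    and v: "\<And>j. j < Suc m \<Longrightarrow> v j \<in> R"
    and null: "\<And>k. k < Suc m \<Longrightarrow> (\<Sum>j<Suc m. v j * (D ^^ k) (g j)) = 0"
    and j: "j < Suc m"
  shows "v m * D (v j) = v j * D (v m)"
proof -
  have null_D: "(\<Sum>j<Suc m. D (v j) * (D ^^ k) (g j)) = 0" if k: "k < m" for k
  proof -
    have D_term: "D (v j * (D ^^ k) (g j)) = v j * (D ^^ Suc k) (g j) + D (v j) * (D ^^ k) (g j)"
      if "j < Suc m" for j
      using D_mult[OF v[OF that] iterD_closed[OF g[OF that]], of k] by (simp add: mult.commute)
    have "0 = D (\<Sum>j<Suc m. v j * (D ^^ k) (g j))" using null[of k] k D_zero by simp
    also have "\<dots> = (\<Sum>j<Suc m. D (v j * (D ^^ k) (g j)))"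
      using v g by (intro D_sum) (auto intro: mult_closed iterD_closed)
    also have "\<dots> = (\<Sum>j<Suc m. v j * (D ^^ Suc k) (g j) + D (v j) * (D ^^ k) (g j))"
      by (intro sum.cong refl D_term) simp
    also have "\<dots> = (\<Sum>j<Suc m. v j * (D ^^ Suc k) (g j)) + (\<Sum>j<Suc m. D (v j) * (D ^^ k) (g j))"
      by (rule sum.distrib)
    also have "(\<Sum>j<Suc m. v j * (D ^^ Suc k) (g j)) = 0" by (rule null) (use k in simp)
    finally show ?thesis by simp
  qed
  define u where "u j = v m * D (v j) - v j * D (v m)" for j
  have "(\<Sum>j<m. u j * wronskian_mat m g $$ (j, k)) = 0" if k: "k < m" for k
  proof -
    have "(\<Sum>j<m. u j * wronskian_mat m g $$ (j, k)) = (\<Sum>j<m. u j * (D ^^ k) (g j))"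
      using k by (intro sum.cong refl) (simp add: wronskian_mat_index)
    also have "\<dots> = (\<Sum>j<Suc m. u j * (D ^^ k) (g j))" by (simp add: u_def)
    also have "\<dots> = (\<Sum>j<Suc m. v m * (D (v j) * (D ^^ k) (g j)) - D (v m) * (v j * (D ^^ k) (g j)))"
      unfolding u_def by (intro sum.cong refl) (simp add: algebra_simps)
    also have "\<dots> = v m * (\<Sum>j<Suc m. D (v j) * (D ^^ k) (g j))
        - D (v m) * (\<Sum>j<Suc m. v j * (D ^^ k) (g j))"
      by (simp only: sum_subtractf sum_distrib_left)
    finally show ?thesis using null[of k] null_D[OF k] k by simp
  qed
  then have u: "u j = 0" if "j < m" for j
    using W that unfolding wronskian_def
    by (intro row_combination_eq_zero[OF wronskian_mat_carrier, where u = u and l = j]) auto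
  show ?thesis
  proof (cases "j = m")
    case False
    then show ?thesis using u[of j] j unfolding u_def by simp
  qed (simp add: mult.commute)
qed

lemma wronskian_last_cofactors:
  assumes g: "\<And>j. j < Suc m \<Longrightarrow> g j \<in> R"
  shows "cofactor (wronskian_mat (Suc m) g) j m \<in> R"
    and "cofactor (wronskian_mat (Suc m) g) m m = wronskian m g"
    and "wronskian (Suc m) g = 0 \<Longrightarrow> k < Suc m \<Longrightarrow>
      (\<Sum>j<Suc m. cofactor (wronskian_mat (Suc m) g) j m * (D ^^ k) (g j)) = 0"
proof -
  let ?M = "wronskian_mat (Suc m) g"
  have entries: "\<And>i j. i < Suc m \<Longrightarrow> j < Suc m \<Longrightarrow> ?M $$ (i, j) \<in> R"
    using g by (simp add: wronskian_mat_index iterD_closed)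
  show "cofactor ?M j m \<in> R" by (rule cofactor_closed[OF wronskian_mat_carrier entries])
  have "mat_delete ?M m m = wronskian_mat m g"
    by (rule eq_matI) (auto simp: mat_delete_def wronskian_mat_def)
  then show "cofactor ?M m m = wronskian m g" unfolding cofactor_def wronskian_def by simp
  show "(\<Sum>j<Suc m. cofactor ?M j m * (D ^^ k) (g j)) = 0"
    if W0: "wronskian (Suc m) g = 0" and k: "k < Suc m"
  proof -
    have "(\<Sum>j<Suc m. cofactor ?M j m * (D ^^ k) (g j)) = (\<Sum>j<Suc m. cofactor ?M j m * ?M $$ (j, k))"
      using k by (intro sum.cong) (auto simp: wronskian_mat_index)
    also have "\<dots> = (if k = m then det ?M else 0)"
      using k by (intro cofactor_column_combination[OF wronskian_mat_carrier]) auto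
    finally show ?thesis using W0 unfolding wronskian_def by simp
  qed
qed

lemma wronskian_nonzero:
  "(\<And>j. j < m \<Longrightarrow> g j \<in> R) \<Longrightarrow> ker_independent {..<m} g \<Longrightarrow> wronskian m g \<noteq> 0"
proof (induction m)
  case 0
  show ?case unfolding wronskian_def using wronskian_mat_carrier[of 0 g] by simp
next
  case (Suc m)
  note g = Suc.prems(1)
  have W: "wronskian m g \<noteq> 0"
    using Suc ker_independent_subset[of "{..<Suc m}" g "{..<m}"] by auto
  \<comment> \<open>The cofactors of the last column give a null vector with constant ratios.\<close>
  define v where "v j = cofactor (wronskian_mat (Suc m) g) j m" for j
  have v: "v j \<in> R" for j unfolding v_def by (rule wronskian_last_cofactors(1)[OF g])
  have vm: "v m = wronskian m g" unfolding v_def by (rule wronskian_last_cofactors(2)[OF g])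
  show "wronskian (Suc m) g \<noteq> 0"
  proof
    assume W0: "wronskian (Suc m) g = 0"
    have null: "(\<Sum>j<Suc m. v j * (D ^^ k) (g j)) = 0" if "k < Suc m" for k
      unfolding v_def by (rule wronskian_last_cofactors(3)[OF g W0 that])
    define c where "c j = (D ^^ deg (v m)) (v j)" for j
    have ratio: "v m * D (v j) = v j * D (v m)" if "j < Suc m" for j
      by (rule wronskian_null_vector_ratios[OF g W v null that])
    have c: "c j \<in> ker" "lead (v m) * v j = c j * v m" if "j < Suc m" for j
      using ratio_constant_ker[OF v _ v ratio[OF that]] vm W unfolding c_def by auto
    have "v m * (\<Sum>j<Suc m. c j * g j) = lead (v m) * (\<Sum>j<Suc m. v j * (D ^^ 0) (g j))"
      using c(2) by (simp add: sum_distrib_left algebra_simps)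
    then have "(\<Sum>j<Suc m. c j * g j) = 0" using null[of 0] vm W by simp
    then have "c m = 0"
      using Suc.prems(2) c(1) unfolding ker_independent_def ker_relation_def by blast
    then show False using lead_nonzero[OF v, of m] vm W unfolding c_def lead_def by simp
  qed
qed

lemma wronskian_transpose_last:
  assumes g: "\<And>j. j < Suc m \<Longrightarrow> g j \<in> R" and rel: "(\<Sum>j<Suc m. g j) = 0" and l: "l < m"
  shows "wronskian m (g \<circ> Transposition.transpose l m) = - wronskian m g"
proof -
  let ?M = "\<lambda>s. mat m m (\<lambda>(j, i). if j = l then (D ^^ i) (g s) else (D ^^ i) (g j))"
  have last: "(D ^^ i) (g m) = (\<Sum>s<m. (- 1) * (D ^^ i) (g s))" for i
  proof -
    have "(\<Sum>j<Suc m. (D ^^ i) (g j)) = 0"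
      using iterD_sum[of "{..<Suc m}" g i] g rel by (simp add: iterD_zero)
    then show ?thesis by (simp add: sum_negf eq_neg_iff_add_eq_0 add.commute)
  qed
  have "wronskian m (g \<circ> Transposition.transpose l m)
      = det (mat m m (\<lambda>(j, i). if j = l then \<Sum>s<m. (- 1) * (D ^^ i) (g s) else (D ^^ i) (g j)))"
    unfolding wronskian_def
    by (rule arg_cong[where f = det], rule eq_matI) (auto simp: wronskian_mat_def last transpose_def)
  also have "\<dots> = (\<Sum>s<m. (- 1) * det (?M s))"
    by (rule det_row_sum[OF l finite_lessThan])
  also have "\<dots> = (\<Sum>s<m. if s = l then - wronskian m g else 0)"
  proof (rule sum.cong[OF refl])
    fix s assume s: "s \<in> {..<m}"
    show "(- 1) * det (?M s) = (if s = l then - wronskian m g else 0)"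
    proof (cases "s = l")
      case True
      then have "?M s = wronskian_mat m g" by (intro eq_matI) (auto simp: wronskian_mat_def)
      then show ?thesis using True unfolding wronskian_def by simp
    next
      case False
      have "det (?M s) = 0"
        using l s False by (intro det_identical_rows[of _ m l s]) (auto intro!: eq_vecI)
      then show ?thesis using False by simp
    qed
  qed
  also have "\<dots> = - wronskian m g" using l by simp
  finally show ?thesis .
qed

lemma dvd_in_wronskian_member:
  assumes g: "\<And>j. j < Suc m \<Longrightarrow> g j \<in> R" and rel: "(\<Sum>j<Suc m. g j) = 0"
    and m: "0 < m" and l: "l < Suc m" and dvd: "\<And>i. i < m \<Longrightarrow> dvd_in R z ((D ^^ i) (g l))"
  shows "dvd_in R z (wronskian m g)"
proof (cases "l = m")
  case True
  let ?\<tau> = "Transposition.transpose 0 m"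
  have "dvd_in R z (wronskian m (g \<circ> ?\<tau>))"
    using g dvd m True by (intro dvd_in_wronskian[of m _ 0]) (auto simp: transpose_def)
  then show ?thesis using wronskian_transpose_last[OF g rel m] dvd_in_uminus by fastforce
next
  case False
  then show ?thesis using g dvd l by (intro dvd_in_wronskian[of m _ l]) auto
qed

lemma deg_wronskian_member:
  assumes g: "\<And>j. j < Suc m \<Longrightarrow> g j \<in> R" and rel: "(\<Sum>j<Suc m. g j) = 0"
    and W: "wronskian m g \<noteq> 0" and l: "l < Suc m"
  shows "deg (wronskian m g) + (\<Sum>i<m. i) + deg (g l) \<le> (\<Sum>j<Suc m. deg (g j))"
proof (cases "l = m")
  case True
  then show ?thesis using deg_wronskian_le[of m g] g W by simp
next
  case False
  let ?\<tau> = "Transposition.transpose l m"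
  have l': "l < m" using l False by simp
  have W': "wronskian m (g \<circ> ?\<tau>) = - wronskian m g" by (rule wronskian_transpose_last[OF g rel l'])
  have "deg (wronskian m (g \<circ> ?\<tau>)) = deg (wronskian m g)"
    using W' deg_uminus wronskian_closed g by simp
  moreover have "deg (wronskian m (g \<circ> ?\<tau>)) + (\<Sum>i<m. i) \<le> (\<Sum>j<m. deg (g (?\<tau> j)))"
    using deg_wronskian_le[of m "g \<circ> ?\<tau>"] g W W' l' by (simp add: transpose_def)
  moreover have "(\<Sum>j<Suc m. deg (g j)) = (\<Sum>j<Suc m. deg (g (?\<tau> j)))"
    using sum.permute[OF permutes_swap_id[of l "{..<Suc m}" m], of "\<lambda>j. deg (g j)"] l'
    by (simp add: comp_def)
  ultimately show ?thesis by simp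
qed

subsection \<open>An abc estimate\<close>

lemma dvd_in_iterD_power: "x \<in> R \<Longrightarrow> k \<le> a \<Longrightarrow> dvd_in R (x ^ (a - k)) ((D ^^ k) (x ^ a))"
proof (induction k)
  case 0
  then show ?case using dvd_in_refl power_closed by simp
next
  case (Suc k)
  obtain r where r: "a - k = Suc r" "a - Suc k = r" using Suc.prems(2) by (metis Suc_diff_Suc Suc_le_lessD)
  then obtain q where q: "q \<in> R" "(D ^^ k) (x ^ a) = x ^ Suc r * q"
    using Suc unfolding dvd_in_def by auto
  have "(D ^^ Suc k) (x ^ a) = x ^ Suc r * D q + q * (of_nat (Suc r) * x ^ r * D x)"
    using Suc.prems q by (simp add: D_mult power_closed D_power del: power_Suc of_nat_Suc)
  also have "\<dots> = x ^ r * (x * D q + q * of_nat (Suc r) * D x)"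
    by (simp add: algebra_simps del: of_nat_Suc)
  finally show ?case
    unfolding dvd_in_def r using q Suc.prems
    by (intro bexI[of _ "x * D q + q * of_nat (Suc r) * D x"])
      (auto intro!: add_closed mult_closed D_closed of_nat_closed simp del: of_nat_Suc)
qed

lemma dvd_in_iterD_power_le: "x \<in> R \<Longrightarrow> k \<le> K \<Longrightarrow> dvd_in R (x ^ (a - K)) ((D ^^ k) (x ^ a))"
proof (cases "k \<le> a")
  case True
  assume "x \<in> R" "k \<le> K"
  then have "dvd_in R (x ^ (a - K)) (x ^ (a - k))" by (intro dvd_in_power_mono) auto
  then show ?thesis using dvd_in_iterD_power[OF \<open>x \<in> R\<close> True] dvd_in_trans by blast
next
  case False
  assume "x \<in> R" "k \<le> K"
  then show ?thesis using False one_dvd_in iterD_closed power_closed by simp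
qed

lemma abc_degree_bound:
  fixes k y :: "nat \<Rightarrow> 'a" and b :: "nat \<Rightarrow> nat"
  assumes m: "0 < m"
    and ky: "\<And>j. j < Suc m \<Longrightarrow> k j \<in> ker \<and> k j \<noteq> 0 \<and> y j \<in> R \<and> y j \<noteq> 0"
    and coprime: "\<And>i j. i < Suc m \<Longrightarrow> j < Suc m \<Longrightarrow> i \<noteq> j \<Longrightarrow> coprime_in R (y i) (y j)"
    and rel: "(\<Sum>j<Suc m. k j * y j ^ b j) = 0"
    and indep: "ker_independent {..<m} (\<lambda>j. k j * y j ^ b j)"
    and l: "l < Suc m"
  shows "(\<Sum>j<Suc m. (b j - (m - 1)) * deg (y j)) + (\<Sum>i<m. i) + b l * deg (y l)
    \<le> (\<Sum>j<Suc m. b j * deg (y j))"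
proof -
  define g where "g j = k j * y j ^ b j" for j
  have g: "g j \<in> R" if "j < Suc m" for j
    using ky[OF that] unfolding g_def by (auto intro: mult_closed power_closed ker_closed)
  have deg_g: "deg (g j) = b j * deg (y j)" if "j < Suc m" for j
    using ky[OF that] unfolding g_def by (simp add: deg_mult deg_power deg_ker power_closed ker_closed)
  have rel_g: "(\<Sum>j<Suc m. g j) = 0" using rel unfolding g_def .
  have W: "wronskian m g \<noteq> 0" using wronskian_nonzero[of m g] g indep unfolding g_def by simp
  have dvd: "dvd_in R (y j ^ (b j - (m - 1))) (wronskian m g)" if j: "j < Suc m" for j
  proof (rule dvd_in_wronskian_member[OF g rel_g m j])
    fix i assume "i < m"
    then have "dvd_in R (y j ^ (b j - (m - 1))) ((D ^^ i) (y j ^ b j))"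
      using ky[OF j] by (intro dvd_in_iterD_power_le) auto
    then show "dvd_in R (y j ^ (b j - (m - 1))) ((D ^^ i) (g j))"
      using ky[OF j] unfolding g_def by (simp add: iterD_mult_ker power_closed dvd_in_mult_left ker_closed)
  qed
  have "coprime_in R (y i ^ (b i - (m - 1))) (y j ^ (b j - (m - 1)))"
    if "i < Suc m" "j < Suc m" "i \<noteq> j" for i j
    using coprime[OF that] ky that by (intro coprime_in_power_right coprime_in_power_left) auto
  then have "dvd_in R (\<Prod>j<Suc m. y j ^ (b j - (m - 1))) (wronskian m g)"
    using dvd ky wronskian_closed[of m g] g
    by (intro dvd_in_prod_if_pairwise_coprime) (auto intro: power_closed)
  then have "deg (\<Prod>j<Suc m. y j ^ (b j - (m - 1))) \<le> deg (wronskian m g)"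
    using ky W by (intro deg_le_if_dvd_in prod_closed power_closed) auto
  moreover have "deg (\<Prod>j<Suc m. y j ^ (b j - (m - 1))) = (\<Sum>j<Suc m. deg (y j ^ (b j - (m - 1))))"
    using ky by (intro deg_prod) (auto intro: power_closed)
  moreover have "\<dots> = (\<Sum>j<Suc m. (b j - (m - 1)) * deg (y j))"
    using ky by (intro sum.cong) (auto simp: deg_power)
  moreover have "deg (wronskian m g) + (\<Sum>i<m. i) + deg (g l) \<le> (\<Sum>j<Suc m. deg (g j))"
    by (rule deg_wronskian_member[OF g rel_g W l])
  moreover have "(\<Sum>j<Suc m. deg (g j)) = (\<Sum>j<Suc m. b j * deg (y j))"
    using deg_g by simp
  ultimately show ?thesis using deg_g[OF l] by linarith
qed


subsection \<open>Fermat-type relations\<close>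

lemma fermat_ker_relation:
  assumes x: "\<And>i. i < n \<Longrightarrow> x i \<in> R" and sum: "(\<Sum>i<n. x i ^ a i) = 0"
  defines "U \<equiv> {i. i < n \<and> D (x i) \<noteq> 0}"
  obtains c where "ker_relation (insert n U) (\<lambda>i. if i < n then x i ^ a i else 1) c"
    "\<And>i. i \<in> U \<Longrightarrow> c i \<noteq> 0" "card {s \<in> insert n U. c s \<noteq> 0} \<le> n"
proof -
  let ?G = "\<lambda>i. if i < n then x i ^ a i else 1"
  \<comment> \<open>Index n stands for the term 1; its coefficient collects the powers killed by D.\<close>
  define rest where "rest = (\<Sum>i\<in>{..<n} - U. x i ^ a i)"
  define c where "c i = (if i \<in> U then 1 else rest)" for i
  have U: "U \<subseteq> {..<n}" "n \<notin> U" "finite U" unfolding U_def by auto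
  have "rest \<in> ker"
    unfolding rest_def using x by (intro ker_sum ker_power) (auto simp: ker_def U_def)
  then have "\<forall>s\<in>insert n U. c s \<in> ker" unfolding c_def using one_ker by auto
  moreover have "(\<Sum>s\<in>insert n U. c s * ?G s) = rest + (\<Sum>i\<in>U. x i ^ a i)"
    using U unfolding c_def by (auto intro!: sum.cong)
  moreover have "\<dots> = 0"
    using sum.subset_diff[OF U(1) finite_lessThan, of "\<lambda>i. x i ^ a i"] sum unfolding rest_def by simp
  ultimately have "ker_relation (insert n U) ?G c" unfolding ker_relation_def by simp
  moreover have "card {s \<in> insert n U. c s \<noteq> 0} \<le> n"
  proof (cases "U = {..<n}")
    case True
    then have "{s \<in> insert n U. c s \<noteq> 0} \<subseteq> {..<n}" unfolding c_def rest_def by auto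
    then show ?thesis by (metis card_lessThan card_mono finite_lessThan)
  next
    case False
    then obtain i where "i < n" "i \<notin> U" using U(1) by auto
    then have "{s \<in> insert n U. c s \<noteq> 0} \<subseteq> {..n} - {i}" using U by auto
    moreover have "card ({..n} - {i}) = n" using \<open>i < n\<close> by simp
    ultimately show ?thesis by (metis card_mono finite_Diff finite_atMost)
  qed
  moreover have "\<And>i. i \<in> U \<Longrightarrow> c i \<noteq> 0" by (simp add: c_def)
  ultimately show ?thesis using that by blast
qed

lemma enumerate_ker_relation:
  assumes S: "finite S" "S \<noteq> {}" and rel: "ker_relation S G c"
    and indep: "\<And>s0. s0 \<in> S \<Longrightarrow> ker_independent (S - {s0}) (\<lambda>s. c s * G s)"
  obtains e where "bij_betw e {..<card S} S" "(\<Sum>j<card S. c (e j) * G (e j)) = 0"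
    "ker_independent {..<card S - 1} (\<lambda>j. c (e j) * G (e j))"
proof -
  obtain e where e: "bij_betw e {..<card S} S"
    using ex_bij_betw_nat_finite[OF S(1)] unfolding atLeast0LessThan by blast
  define m where "m = card S - 1"
  have card: "card S = Suc m" using S unfolding m_def by (simp add: card_gt_0_iff)
  have "(\<Sum>j<card S. c (e j) * G (e j)) = 0"
    using sum.reindex_bij_betw[OF e, of "\<lambda>s. c s * G s"] rel unfolding ker_relation_def by simp
  moreover have "bij_betw e ({..<Suc m} - {m}) (S - {e m})"
    using e card by (intro bij_betw_DiffI) (auto simp: bij_betw_def)
  then have "bij_betw e {..<m} (S - {e m})" by (simp add: lessThan_Suc)
  moreover have "e m \<in> S" using e card by (auto dest: bij_betwE)
  ultimately show ?thesis
    using that e indep[of "e m"] ker_independent_reindex[of e "{..<m}" "S - {e m}" "\<lambda>s. c s * G s"]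
    unfolding m_def by (simp add: comp_def)
qed

lemma enumerated_minimal_ker_relation:
  assumes I: "finite I" and G: "\<And>s. s \<in> I \<Longrightarrow> G s \<noteq> 0"
    and rel: "ker_relation I G c0" and nontrivial: "\<exists>s\<in>I. c0 s \<noteq> 0"
  obtains m e c where "0 < m" "Suc m \<le> card {s \<in> I. c0 s \<noteq> 0}" "inj_on e {..<Suc m}"
    "e ` {..<Suc m} \<subseteq> I" "\<And>j. j < Suc m \<Longrightarrow> c j \<in> ker \<and> c j \<noteq> 0"
    "(\<Sum>j<Suc m. c j * G (e j)) = 0" "ker_independent {..<m} (\<lambda>j. c j * G (e j))"
proof -
  obtain c where c: "ker_relation I G c" "{s \<in> I. c s \<noteq> 0} \<noteq> {}"
      "card {s \<in> I. c s \<noteq> 0} \<le> card {s \<in> I. c0 s \<noteq> 0}"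
      "\<And>s0. s0 \<in> I \<Longrightarrow> c s0 \<noteq> 0 \<Longrightarrow> ker_independent ({s \<in> I. c s \<noteq> 0} - {s0}) (\<lambda>s. c s * G s)"
    using minimal_ker_relation[OF I rel nontrivial] by blast
  define S where "S = {s \<in> I. c s \<noteq> 0}"
  have S: "finite S" "S \<noteq> {}" "S \<subseteq> I" using I c unfolding S_def by auto
  have "(\<Sum>s\<in>I. c s * G s) = (\<Sum>s\<in>S. c s * G s)"
    using I S by (intro sum.mono_neutral_right) (auto simp: S_def)
  then have "ker_relation S G c" using c(1) S(3) unfolding ker_relation_def by auto
  then obtain e where e: "bij_betw e {..<card S} S" "(\<Sum>j<card S. c (e j) * G (e j)) = 0"
      "ker_independent {..<card S - 1} (\<lambda>j. c (e j) * G (e j))"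
    using enumerate_ker_relation[OF S(1,2)] c(4) unfolding S_def by blast
  define m where "m = card S - 1"
  have card_S: "card S = Suc m" using S(1,2) unfolding m_def by (simp add: card_gt_0_iff)
  then have e: "bij_betw e {..<Suc m} S" "(\<Sum>j<Suc m. c (e j) * G (e j)) = 0"
      "ker_independent {..<m} (\<lambda>j. c (e j) * G (e j))"
    using e by simp_all
  have e_S: "e j \<in> S" if "j < Suc m" for j using e(1) that by (auto dest: bij_betwE)
  have "m \<noteq> 0"
  proof
    assume "m = 0"
    then have "c (e 0) * G (e 0) = 0" using e(2) by simp
    then show False using e_S[of 0] G S(3) unfolding S_def by auto
  qed
  show ?thesis
  proof (rule that[of m e "c \<circ> e"])
    show "0 < m" using \<open>m \<noteq> 0\<close> by simp
    show "Suc m \<le> card {s \<in> I. c0 s \<noteq> 0}" using c(3) card_S unfolding S_def by simp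
    show "inj_on e {..<Suc m}" using e(1) by (simp add: bij_betw_def)
    show "e ` {..<Suc m} \<subseteq> I" using e_S S(3) by auto
    show "(c \<circ> e) j \<in> ker \<and> (c \<circ> e) j \<noteq> 0" if "j < Suc m" for j
      using e_S[OF that] S(3) c(1) unfolding ker_relation_def S_def by auto
    show "(\<Sum>j<Suc m. (c \<circ> e) j * G (e j)) = 0" using e(2) by simp
    show "ker_independent {..<m} (\<lambda>j. (c \<circ> e) j * G (e j))" using e(3) by simp
  qed
qed

lemma minimal_fermat_relation:
  assumes x: "\<And>i. i < n \<Longrightarrow> x i \<in> R \<and> x i \<noteq> 0" and sum: "(\<Sum>i<n. x i ^ a i) = 0"
    and moving: "\<exists>i<n. D (x i) \<noteq> 0"
  defines "G \<equiv> \<lambda>i. if i < n then x i ^ a i else 1"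
  obtains m e c where "0 < m" "Suc m \<le> n" "inj_on e {..<Suc m}" "\<And>j. j < Suc m \<Longrightarrow> e j \<le> n"
    "\<And>j. j < Suc m \<Longrightarrow> c j \<in> ker \<and> c j \<noteq> 0" "(\<Sum>j<Suc m. c j * G (e j)) = 0"
    "ker_independent {..<m} (\<lambda>j. c j * G (e j))" "\<exists>j<Suc m. e j < n \<and> D (x (e j)) \<noteq> 0"
proof -
  define U where "U = {i. i < n \<and> D (x i) \<noteq> 0}"
  define I where "I = insert n U"
  have I: "finite I" "I \<subseteq> {..n}" unfolding I_def U_def by auto
  have G: "G s \<noteq> 0" for s using x unfolding G_def by auto
  obtain c0 where c0: "ker_relation I G c0" "\<And>i. i \<in> U \<Longrightarrow> c0 i \<noteq> 0"
      "card {s \<in> I. c0 s \<noteq> 0} \<le> n"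
    using fermat_ker_relation[of n x a] x sum unfolding G_def I_def U_def by blast
  have "\<exists>s\<in>I. c0 s \<noteq> 0" using moving c0(2) unfolding I_def U_def by blast
  then obtain m e c where m: "0 < m" "Suc m \<le> card {s \<in> I. c0 s \<noteq> 0}"
      and e: "inj_on e {..<Suc m}" "e ` {..<Suc m} \<subseteq> I"
      and c: "\<And>j. j < Suc m \<Longrightarrow> c j \<in> ker \<and> c j \<noteq> 0" "(\<Sum>j<Suc m. c j * G (e j)) = 0"
        "ker_independent {..<m} (\<lambda>j. c j * G (e j))"
    using enumerated_minimal_ker_relation[OF I(1) G c0(1)] by blast
  have "e 0 \<noteq> e 1" using inj_onD[OF e(1), of 0 1] m(1) by auto
  obtain j where j: "j < Suc m" "e j \<noteq> n"
  proof (cases "e 0 = n")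
    case True
    then show ?thesis using that[of 1] \<open>e 0 \<noteq> e 1\<close> m(1) by simp
  qed (use that[of 0] in simp)
  then have "e j \<in> U" using e(2) unfolding I_def by auto
  show ?thesis
  proof (rule that[OF m(1) _ e(1) _ c])
    show "Suc m \<le> n" using m(2) c0(3) by simp
    show "e i \<le> n" if "i < Suc m" for i using e(2) I(2) that by auto
    show "\<exists>j<Suc m. e j < n \<and> D (x (e j)) \<noteq> 0" using j \<open>e j \<in> U\<close> unfolding U_def by auto
  qed
qed

theorem fermat_solution_in_ker_of_nonzero:
  assumes a: "\<And>i. i < n \<Longrightarrow> 0 < a i"
    and x: "\<And>i. i < n \<Longrightarrow> x i \<in> R \<and> x i \<noteq> 0"
    and coprime: "\<And>i j. i < n \<Longrightarrow> j < n \<Longrightarrow> i \<noteq> j \<Longrightarrow> coprime_in R (x i) (x j)"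
    and sum: "(\<Sum>i<n. x i ^ a i) = 0" and recip: "(\<Sum>i<n. 1 / real (a i)) \<le> 1 / (real n - 2)"
    and i: "i < n"
  shows "D (x i) = 0"
proof (rule ccontr)
  let ?G = "\<lambda>i. if i < n then x i ^ a i else 1"
  assume "D (x i) \<noteq> 0"
  then obtain m e c where m: "0 < m" "Suc m \<le> n"
      and e: "inj_on e {..<Suc m}" "\<And>j. j < Suc m \<Longrightarrow> e j \<le> n"
      and c: "\<And>j. j < Suc m \<Longrightarrow> c j \<in> ker \<and> c j \<noteq> 0"
      and rel: "(\<Sum>j<Suc m. c j * ?G (e j)) = 0"
      and indep: "ker_independent {..<m} (\<lambda>j. c j * ?G (e j))"
      and moving: "\<exists>j<Suc m. e j < n \<and> D (x (e j)) \<noteq> 0"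
    using minimal_fermat_relation[of n x a] x sum i by blast
  \<comment> \<open>The constant term (e j = n) is written as 1 ^ 1.\<close>
  define y where "y j = (if e j < n then x (e j) else 1)" for j
  define b where "b j = (if e j < n then a (e j) else 1)" for j
  have G: "?G (e j) = y j ^ b j" for j unfolding y_def b_def by simp
  have ky: "c j \<in> ker \<and> c j \<noteq> 0 \<and> y j \<in> R \<and> y j \<noteq> 0" if "j < Suc m" for j
    using c[OF that] x one_closed unfolding y_def by auto
  have cop: "coprime_in R (y i) (y j)" if "i < Suc m" "j < Suc m" "i \<noteq> j" for i j
    using coprime[of "e i" "e j"] inj_onD[OF e(1), of i j] that
    unfolding y_def by (auto simp: coprime_in_one_left coprime_in_one_right)
  have deg_pos: "e j < n" if "0 < deg (y j)" for j
    using that deg_one unfolding y_def by (auto split: if_splits)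
  show False
  proof (rule abc_bound_contradiction[of "{..<Suc m}" "Suc m" n "\<Sum>i<m. i" "\<lambda>j. deg (y j)" b])
    show "Suc m - 2 \<le> (\<Sum>i<m. i)" using pred_le_sum_lessThan[of m] by simp
    show "0 < b j" if "j \<in> {..<Suc m}" "0 < deg (y j)" for j
      using a deg_pos[OF that(2)] unfolding b_def by simp
    show "\<exists>j\<in>{..<Suc m}. 0 < deg (y j)"
      using moving x deg_eq_0_iff unfolding y_def by fastforce
    show "(\<Sum>j\<in>{..<Suc m}. (b j - (Suc m - 2)) * deg (y j)) + (\<Sum>i<m. i) + b l * deg (y l)
        \<le> (\<Sum>j\<in>{..<Suc m}. b j * deg (y j))" if "l \<in> {..<Suc m}" for l
      using abc_degree_bound[OF m(1) ky cop, where b = b and l = l] rel indep that unfolding G by simp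
    let ?J = "{j \<in> {..<Suc m}. 0 < deg (y j)}"
    have "inj_on e ?J" using e(1) by (rule inj_on_subset) auto
    then have "(\<Sum>j\<in>?J. 1 / real (b j)) = (\<Sum>i\<in>e ` ?J. 1 / real (a i))"
      by (simp add: sum.reindex b_def deg_pos)
    also have "\<dots> \<le> (\<Sum>i<n. 1 / real (a i))" using deg_pos by (intro sum_mono2) auto
    finally show "(\<Sum>j\<in>?J. 1 / real (b j)) \<le> 1 / (real n - 2)" using recip by simp
  qed (use m in auto)
qed

theorem fermat_solution_in_ker:
  assumes "\<And>i. i < n \<Longrightarrow> 0 < a i" and x: "\<And>i. i < n \<Longrightarrow> x i \<in> R"
    and coprime: "\<And>i j. i < n \<Longrightarrow> j < n \<Longrightarrow> i \<noteq> j \<Longrightarrow> coprime_in R (x i) (x j)"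
    and "(\<Sum>i<n. x i ^ a i) = 0" and "(\<Sum>i<n. 1 / real (a i)) \<le> 1 / (real n - 2)"
    and i: "i < n"
  shows "D (x i) = 0"
proof (cases "\<forall>j<n. x j \<noteq> 0")
  case True
  then show ?thesis using fermat_solution_in_ker_of_nonzero[of n a x] assms by blast
next
  case False
  then obtain k where k: "k < n" "x k = 0" by auto
  show ?thesis
  proof (cases "i = k")
    case False
    then obtain v where "v \<in> R" "x i * v = 1"
      using unit_if_coprime_in_zero coprime[OF i k(1)] k(2) by auto
    then show ?thesis using unit_ker x[OF i] by blast
  qed (use k D_zero in simp)
qed

end

section \<open>The Makar-Limanov invariant\<close>

lemma lnd_iff: "lnd R D \<longleftrightarrow> subring R \<and> lnd_on R D"
  unfolding lnd_def lnd_axioms_def subring_carrier_def by simp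

lemma fermat_solution_in_mlinv:
  fixes x :: "nat \<Rightarrow> 'a::{idom, ring_char_0}"
  assumes "subring R" and "\<And>i. i < n \<Longrightarrow> 0 < a i" and "\<And>i. i < n \<Longrightarrow> x i \<in> R"
    and "\<And>i j. i < n \<Longrightarrow> j < n \<Longrightarrow> i \<noteq> j \<Longrightarrow> coprime_in R (x i) (x j)"
    and "(\<Sum>i<n. x i ^ a i) = 0" and "(\<Sum>i<n. 1 / real (a i)) \<le> 1 / (real n - 2)"
    and "i < n"
  shows "x i \<in> mlinv R"
  using lnd.fermat_solution_in_ker[of R _ n a x i] assms unfolding mlinv_def lnd_iff by blast

lemma mlinv_subring:
  fixes R :: "'a::{idom, ring_char_0} set"
  assumes R: "subring R"
  shows "subring (mlinv R)"
proof -
  have "D 0 = 0 \<and> D 1 = 0 \<and> (\<forall>x\<in>R. \<forall>y\<in>R. D x = 0 \<longrightarrow> D y = 0 \<longrightarrow>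
      D (x + y) = 0 \<and> D (x - y) = 0 \<and> D (x * y) = 0)" if "lnd_on R D" for D
  proof -
    interpret lnd R D using R that by (simp add: lnd_iff)
    show ?thesis by (simp add: D_zero D_one D_add D_diff D_mult)
  qed
  then show ?thesis using R unfolding subring_def mlinv_def by auto
qed

lemma mlinv_factorially_closed:
  fixes R :: "'a::{idom, ring_char_0} set"
  assumes R: "subring R" and fc: "factorially_closed R"
  shows "factorially_closed (mlinv R)"
  unfolding factorially_closed_def
proof (intro allI impI)
  fix x y :: 'a assume nz: "x \<noteq> 0" "y \<noteq> 0" and xy: "x * y \<in> mlinv R"
  then have xR: "x \<in> R" and yR: "y \<in> R"
    using fc unfolding factorially_closed_def mlinv_def by blast+
  have "D x = 0 \<and> D y = 0" if "lnd_on R D" for D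
  proof -
    interpret lnd R D using R that by (simp add: lnd_iff)
    show ?thesis
      using xy ker_factor[OF xR yR nz] ker_factor[OF yR xR nz(2,1)] that
      unfolding mlinv_def by (simp add: mult.commute)
  qed
  then show "x \<in> mlinv R \<and> y \<in> mlinv R" unfolding mlinv_def using xR yR by auto
qed

section \<open>Constants in the polynomial ring\<close>

lemma lookup_const_poly_mult:
  "Poly_Mapping.lookup (const_poly c * p) m = c * Poly_Mapping.lookup p m"
  unfolding const_poly_def mult_map_scale_conv_mult[symmetric]
  by (simp add: Poly_Mapping.map.rep_eq when_def)

lemma const_poly_0: "const_poly 0 = 0"
  and const_poly_1: "const_poly 1 = 1"
  and const_poly_add: "const_poly (a + b) = const_poly a + const_poly b"
  and const_poly_mult: "const_poly (a * b) = const_poly a * const_poly b"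
  unfolding const_poly_def by (simp_all add: mult_single single_add)

lemma const_poly_power: "const_poly (a ^ k) = const_poly a ^ k"
  by (induction k) (simp_all add: const_poly_1 const_poly_mult)

lemma const_poly_sum: "const_poly (sum f S) = (\<Sum>i\<in>S. const_poly (f i))"
  by (induction S rule: infinite_finite_induct) (simp_all add: const_poly_0 const_poly_add)

lemma const_poly_in_poly_ring: "const_poly c \<in> poly_ring N"
  unfolding poly_ring_def const_poly_def by simp

lemma subring_poly_ring: "subring (poly_ring N :: ((nat \<Rightarrow>\<^sub>0 nat) \<Rightarrow>\<^sub>0 'a::comm_ring_1) set)"
  unfolding subring_def
proof (intro conjI ballI)
  show "0 \<in> poly_ring N" "1 \<in> poly_ring N" unfolding poly_ring_def by simp_all
  fix p q :: "(nat \<Rightarrow>\<^sub>0 nat) \<Rightarrow>\<^sub>0 'a" assume "p \<in> poly_ring N" "q \<in> poly_ring N"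
  then have p: "\<And>m i. m \<in> Poly_Mapping.keys p \<Longrightarrow> i \<in> Poly_Mapping.keys m \<Longrightarrow> i < N"
    and q: "\<And>m i. m \<in> Poly_Mapping.keys q \<Longrightarrow> i \<in> Poly_Mapping.keys m \<Longrightarrow> i < N"
    unfolding poly_ring_def by auto
  show "p + q \<in> poly_ring N" unfolding poly_ring_def using keys_add[of p q] p q by blast
  show "p - q \<in> poly_ring N" unfolding poly_ring_def using keys_diff[of p q] p q by blast
  show "p * q \<in> poly_ring N" unfolding poly_ring_def
  proof (intro CollectI ballI)
    fix m i assume "m \<in> Poly_Mapping.keys (p * q)" "i \<in> Poly_Mapping.keys m"
    moreover obtain u v where "m = u + v" "u \<in> Poly_Mapping.keys p" "v \<in> Poly_Mapping.keys q"
      using keys_mult[of p q] calculation(1) by blast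
    ultimately show "i < N" using keys_add[of u v] p q by blast
  qed
qed

lemma const_poly_dvd_in_poly_ring:
  assumes w: "w \<in> poly_ring N" and dvd: "\<And>m. x dvd Poly_Mapping.lookup w m"
  shows "dvd_in (poly_ring N) (const_poly x) w"
proof -
  have "\<forall>m. \<exists>t. Poly_Mapping.lookup w m = x * t" using dvd unfolding dvd_def by blast
  then have "\<exists>t. \<forall>m. Poly_Mapping.lookup w m = x * t m" by (rule choice)
  then obtain t where t: "\<And>m. Poly_Mapping.lookup w m = x * t m" by blast
  define s where "s = Poly_Mapping.mapp (\<lambda>m _. t m) w"
  have "const_poly x * s = w"
  proof (rule poly_mapping_eqI)
    fix m
    show "Poly_Mapping.lookup (const_poly x * s) m = Poly_Mapping.lookup w m"
      by (cases "m \<in> Poly_Mapping.keys w")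
        (simp_all add: lookup_const_poly_mult s_def lookup_mapp t in_keys_iff)
  qed
  moreover have "s \<in> poly_ring N"
    using w keys_mapp_subset[of _ w] unfolding poly_ring_def s_def by blast
  ultimately show ?thesis unfolding dvd_in_def by auto
qed

lemma coprime_in_poly_ring_if_rel_prime:
  fixes x y :: "'a::idom"
  assumes rp: "rel_prime x y"
  shows "coprime_in (poly_ring N) (const_poly x) (const_poly y)"
  unfolding coprime_in_def
proof (intro ballI impI)
  fix w assume w: "w \<in> poly_ring N" and dvd: "dvd_in (poly_ring N) (const_poly x) (const_poly y * w)"
  have "x dvd Poly_Mapping.lookup w m" for m
  proof (cases "y = 0")
    case True
    then show ?thesis using unit_if_rel_prime_zero rp by (blast intro: dvd_trans one_dvd)
  next
    case False
    obtain q where q: "const_poly y * w = const_poly x * q" using dvd unfolding dvd_in_def by auto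
    have "y * Poly_Mapping.lookup w m = x * Poly_Mapping.lookup q m"
      using arg_cong[OF q, of "\<lambda>p. Poly_Mapping.lookup p m"] by (simp add: lookup_const_poly_mult)
    then show ?thesis using dvd_if_rel_prime_dvd_mult[OF rp False] by (metis dvdI)
  qed
  then show "dvd_in (poly_ring N) (const_poly x) w" by (rule const_poly_dvd_in_poly_ring[OF w])
qed

locale fermat_solution =
  fixes x :: "nat \<Rightarrow> 'a::{idom, ring_char_0}" and a :: "nat \<Rightarrow> nat" and n :: nat
  assumes exponents_pos: "\<forall>i<n. a i > 0"
    and fermat_sum: "(\<Sum>i<n. x i ^ a i) = 0"
    and reciprocal_sum: "(\<Sum>i<n. 1 / real (a i)) \<le> 1 / (real n - 2)"
    and pairwise_rel_prime: "\<forall>i<n. \<forall>j<n. i \<noteq> j \<longrightarrow> rel_prime (x i) (x j)"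
begin

lemma in_mlinv_if_factorially_closed:
  assumes R: "subring R" "factorially_closed R" "\<forall>i<n. x i \<in> R" and i: "i < n"
  shows "x i \<in> mlinv R"
proof -
  interpret subring_carrier R using R(1) by (simp add: subring_carrier_def)
  show ?thesis
    by (rule fermat_solution_in_mlinv[where R = R and n = n and a = a and x = x])
      (use R i exponents_pos fermat_sum reciprocal_sum pairwise_rel_prime
        in \<open>auto intro: coprime_in_if_rel_prime\<close>)
qed

lemma const_poly_in_mlinv_poly_ring:
  assumes i: "i < n"
  shows "const_poly (x i) \<in> mlinv (poly_ring N)"
proof -
  have "(\<Sum>i<n. const_poly (x i) ^ a i) = const_poly (\<Sum>i<n. x i ^ a i)"
    by (simp add: const_poly_sum const_poly_power)
  then have sum: "(\<Sum>i<n. const_poly (x i) ^ a i) = 0" using fermat_sum by (simp add: const_poly_0)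
  show ?thesis
    by (rule fermat_solution_in_mlinv[where R = "poly_ring N" and n = n and a = a
          and x = "\<lambda>i. const_poly (x i)"])
      (use i sum exponents_pos reciprocal_sum pairwise_rel_prime
        in \<open>auto intro: subring_poly_ring const_poly_in_poly_ring coprime_in_poly_ring_if_rel_prime\<close>)
qed

lemma in_mlinv_iter:
  "subring (mlinv_iter k :: 'a set) \<and> factorially_closed (mlinv_iter k :: 'a set)
    \<and> (\<forall>i<n. x i \<in> mlinv_iter k)"
proof (induction k)
  case 0
  then show ?case by (simp add: subring_def factorially_closed_def)
next
  case (Suc k)
  then show ?case by (simp add: mlinv_subring mlinv_factorially_closed in_mlinv_if_factorially_closed)
qed

lemma in_rigid_core: "i < n \<Longrightarrow> x i \<in> rigid_core"
  using in_mlinv_iter unfolding rigid_core_def by blast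

end

theorem theorem6p7:
  fixes x :: "nat \<Rightarrow> 'a::{idom, ring_char_0}" and a :: "nat \<Rightarrow> nat" and n :: nat
  assumes "n \<ge> 3"
    and "\<forall>i<n. a i > 0"
    and "(\<Sum>i<n. x i ^ a i) = 0"
    and "(\<Sum>i<n. 1 / real (a i)) \<le> 1 / (real n - 2)"
    and "\<forall>i<n. \<forall>j<n. i \<noteq> j \<longrightarrow> rel_prime (x i) (x j)"
  shows "(\<forall>R. subring R \<and> factorially_closed R \<and> (\<forall>i<n. x i \<in> R) \<longrightarrow> (\<forall>i<n. x i \<in> mlinv R))
       \<and> (\<forall>N. \<forall>i<n. const_poly (x i) \<in> mlinv (poly_ring N))
       \<and> (\<forall>i<n. x i \<in> rigid_core)"
proof -
  interpret fermat_solution x a n using assms(2-5) by (simp add: fermat_solution_def)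
  show ?thesis using in_mlinv_if_factorially_closed const_poly_in_mlinv_poly_ring in_rigid_core by blast
qed

end
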